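(* The element $C=\sum_{i}C_i$ is central in the frozen Jacobian algebra $\Gamma_\sigma$.
   Context: $K$ a field. $P$: regular polygon with vertices $P_1,\dots,P_n$ ($n\ge3$) counterclockwise; $\sigma$: triangulation (maximal set of non-crossing diagonals). $Q_\sigma$: vertices = edges of $\sigma$ (sides and diagonals); internal arrow $a\to b$ when $a,b$ are sides of a common triangle and $a$ precedes $b$ anticlockwise around their common vertex; external arrow $a\to b$ between the two sides of $P$ at each polygon vertex incident to a diagonal, $a$ preceding $b$ anticlockwise. Minimal cycles (no repeated arrows, enclosing a region with connected interior containing no arrows) are cyclic triangles (three internal arrows in a triangle) and big cycles (internal arrows and one external arrow around a vertex of $P$). $W_\sigma=\sum$cyclic triangles$-\sum$big cycles; $F$ = vertices given by sides; $\Gamma_\sigma=KQ_\sigma/J$, $J$ generated by cyclic derivatives $\partial_aW_\sigma$ ($\partial_a(a_1\cdots a_d)=\sum_{a_i=a}a_{i+1}\cdots a_da_1\cdots a_{i-1}$) for arrows $a$ with source or target outside $F$. For each vertex $i$, all minimal cycles passing through $i$ (read as cycles at $i$) are equal in $\Gamma_\sigma$; $C_i$ denotes this common element. *)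

theory Defs
  imports Main
begin

text \<open>Polygon vertices P_1..P_n are encoded as 0..n-1 (counterclockwise).
  An edge (side or diagonal) between vertices i and j is the pair (i,j) with i < j.\<close>

type_synonym edge = "nat \<times> nat"
type_synonym qpath = "edge list"

definition edg :: "nat \<Rightarrow> nat \<Rightarrow> edge" where
  "edg a b = (min a b, max a b)"

definition prv :: "nat \<Rightarrow> nat \<Rightarrow> nat" where
  "prv n i = (i + n - 1) mod n"

definition nxt :: "nat \<Rightarrow> nat \<Rightarrow> nat" where
  "nxt n i = (i + 1) mod n"

definition is_side :: "nat \<Rightarrow> edge \<Rightarrow> bool" where
  "is_side n e \<longleftrightarrow> fst e < snd e \<and> snd e < n \<and>
     (snd e = fst e + 1 \<or> (fst e = 0 \<and> snd e = n - 1))"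

definition is_diag :: "nat \<Rightarrow> edge \<Rightarrow> bool" where
  "is_diag n e \<longleftrightarrow> fst e < snd e \<and> snd e < n \<and> \<not> is_side n e"

definition crosses :: "edge \<Rightarrow> edge \<Rightarrow> bool" where
  "crosses d e \<longleftrightarrow> (fst d < fst e \<and> fst e < snd d \<and> snd d < snd e) \<or>
                     (fst e < fst d \<and> fst d < snd e \<and> snd e < snd d)"

definition triangulation :: "nat \<Rightarrow> edge set \<Rightarrow> bool" where
  "triangulation n \<sigma> \<longleftrightarrow> (\<forall>d\<in>\<sigma>. is_diag n d) \<and> (\<forall>d\<in>\<sigma>. \<forall>e\<in>\<sigma>. \<not> crosses d e) \<and>
     (\<forall>d. is_diag n d \<and> d \<notin> \<sigma> \<longrightarrow> (\<exists>e\<in>\<sigma>. crosses d e))"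

text \<open>Vertices of the quiver: sides and diagonals of the triangulation.\<close>
definition edges :: "nat \<Rightarrow> edge set \<Rightarrow> edge set" where
  "edges n \<sigma> = {e. is_side n e} \<union> \<sigma>"

definition sides :: "nat \<Rightarrow> edge set" where
  "sides n = {e. is_side n e}"

definition triangles :: "nat \<Rightarrow> edge set \<Rightarrow> (nat \<times> nat \<times> nat) set" where
  "triangles n \<sigma> = {(p,q,r). p < q \<and> q < r \<and> r < n \<and>
      (p,q) \<in> edges n \<sigma> \<and> (q,r) \<in> edges n \<sigma> \<and> (p,r) \<in> edges n \<sigma>}"

text \<open>Cyclic triangle of the triangle p<q<r, as a cyclic sequence of quiver vertices
  (arrows go from each entry to the next, and from the last to the first).\<close>
definition tri_cycle :: "nat \<times> nat \<times> nat \<Rightarrow> edge list" where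
  "tri_cycle t = (case t of (p,q,r) \<Rightarrow> [(q,r),(p,q),(p,r)])"

definition cyc_arrows :: "edge list \<Rightarrow> (edge \<times> edge) set" where
  "cyc_arrows c = {(c ! k, c ! ((k + 1) mod length c)) | k. k < length c}"

definition ext_vertices :: "nat \<Rightarrow> edge set \<Rightarrow> nat set" where
  "ext_vertices n \<sigma> = {i. i < n \<and> (\<exists>d\<in>\<sigma>. fst d = i \<or> snd d = i)}"

text \<open>Neighbours of polygon vertex i in the triangulation, in anticlockwise order
  starting at the next vertex and ending at the previous vertex.\<close>
definition fan :: "nat \<Rightarrow> edge set \<Rightarrow> nat \<Rightarrow> nat list" where
  "fan n \<sigma> i = sort_key (\<lambda>w. (w + n - i) mod n)
      (sorted_list_of_set {w. w < n \<and> edg i w \<in> edges n \<sigma>})"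

text \<open>Big cycle around polygon vertex i: internal arrows around i followed by the
  external arrow closing the cycle.\<close>
definition big_cycle :: "nat \<Rightarrow> edge set \<Rightarrow> nat \<Rightarrow> edge list" where
  "big_cycle n \<sigma> i = map (edg i) (fan n \<sigma> i)"

definition int_arrows :: "nat \<Rightarrow> edge set \<Rightarrow> (edge \<times> edge) set" where
  "int_arrows n \<sigma> = (\<Union>t\<in>triangles n \<sigma>. cyc_arrows (tri_cycle t))"

definition ext_arrows :: "nat \<Rightarrow> edge set \<Rightarrow> (edge \<times> edge) set" where
  "ext_arrows n \<sigma> = {(edg (prv n i) i, edg i (nxt n i)) | i. i \<in> ext_vertices n \<sigma>}"

definition arrows :: "nat \<Rightarrow> edge set \<Rightarrow> (edge \<times> edge) set" where
  "arrows n \<sigma> = int_arrows n \<sigma> \<union> ext_arrows n \<sigma>"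

definition min_cycles :: "nat \<Rightarrow> edge set \<Rightarrow> edge list set" where
  "min_cycles n \<sigma> = tri_cycle ` triangles n \<sigma> \<union> big_cycle n \<sigma> ` ext_vertices n \<sigma>"

text \<open>Paths of the quiver, as nonempty sequences of quiver vertices joined by arrows
  (the quiver has no multiple arrows). A one-element list is a trivial path.\<close>
definition valid_path :: "nat \<Rightarrow> edge set \<Rightarrow> qpath \<Rightarrow> bool" where
  "valid_path n \<sigma> p \<longleftrightarrow> p \<noteq> [] \<and> set p \<subseteq> edges n \<sigma> \<and>
     (\<forall>k. Suc k < length p \<longrightarrow> (p ! k, p ! Suc k) \<in> arrows n \<sigma>)"

definition KQ :: "nat \<Rightarrow> edge set \<Rightarrow> (qpath \<Rightarrow> 'k::field) set" where
  "KQ n \<sigma> = {x. finite {p. x p \<noteq> 0} \<and> (\<forall>p. x p \<noteq> 0 \<longrightarrow> valid_path n \<sigma> p)}"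

definition pmul :: "(qpath \<Rightarrow> 'k::field) \<Rightarrow> (qpath \<Rightarrow> 'k) \<Rightarrow> qpath \<Rightarrow> 'k" where
  "pmul x y = (\<lambda>r. \<Sum>(p,q)\<in>{p. x p \<noteq> 0} \<times> {q. y q \<noteq> 0}.
       if p \<noteq> [] \<and> q \<noteq> [] \<and> last p = hd q \<and> p @ tl q = r then x p * y q else 0)"

definition single :: "qpath \<Rightarrow> qpath \<Rightarrow> 'k::field" where
  "single p = (\<lambda>r. if r = p then 1 else 0)"

text \<open>Cyclic derivative of the cyclic word given by the cyclic vertex sequence c
  with respect to arrow a: for each occurrence a = a_k, the path a_{k+1}...a_{k-1}.\<close>
definition cycderiv :: "edge \<times> edge \<Rightarrow> edge list \<Rightarrow> qpath \<Rightarrow> 'k::field" where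
  "cycderiv a c = (\<lambda>r. \<Sum>k<length c.
      if (c ! k, c ! ((k + 1) mod length c)) = a \<and> rotate (Suc k) c = r then 1 else 0)"

text \<open>Cyclic derivative of W = sum of cyclic triangles - sum of big cycles.\<close>
definition dW :: "nat \<Rightarrow> edge set \<Rightarrow> edge \<times> edge \<Rightarrow> qpath \<Rightarrow> 'k::field" where
  "dW n \<sigma> a = (\<lambda>r. (\<Sum>t\<in>triangles n \<sigma>. cycderiv a (tri_cycle t) r)
                   - (\<Sum>i\<in>ext_vertices n \<sigma>. cycderiv a (big_cycle n \<sigma> i) r))"

definition relations :: "nat \<Rightarrow> edge set \<Rightarrow> (qpath \<Rightarrow> 'k::field) set" where
  "relations n \<sigma> = {dW n \<sigma> a | a. a \<in> arrows n \<sigma> \<and>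
       (fst a \<notin> sides n \<or> snd a \<notin> sides n)}"

inductive_set gen_ideal :: "nat \<Rightarrow> edge set \<Rightarrow> (qpath \<Rightarrow> 'k::field) set \<Rightarrow> (qpath \<Rightarrow> 'k) set"
  for n \<sigma> R where
  zero: "(\<lambda>_. 0) \<in> gen_ideal n \<sigma> R"
| base: "\<rho> \<in> R \<Longrightarrow> \<rho> \<in> gen_ideal n \<sigma> R"
| add: "a \<in> gen_ideal n \<sigma> R \<Longrightarrow> b \<in> gen_ideal n \<sigma> R \<Longrightarrow> (\<lambda>r. a r + b r) \<in> gen_ideal n \<sigma> R"
| smul: "a \<in> gen_ideal n \<sigma> R \<Longrightarrow> (\<lambda>r. c * a r) \<in> gen_ideal n \<sigma> R"
| lmul: "a \<in> gen_ideal n \<sigma> R \<Longrightarrow> x \<in> KQ n \<sigma> \<Longrightarrow> pmul x a \<in> gen_ideal n \<sigma> R"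
| rmul: "a \<in> gen_ideal n \<sigma> R \<Longrightarrow> x \<in> KQ n \<sigma> \<Longrightarrow> pmul a x \<in> gen_ideal n \<sigma> R"

definition jacobian_ideal :: "nat \<Rightarrow> edge set \<Rightarrow> (qpath \<Rightarrow> 'k::field) set" where
  "jacobian_ideal n \<sigma> = gen_ideal n \<sigma> (relations n \<sigma>)"

definition is_min_cycle_at :: "nat \<Rightarrow> edge set \<Rightarrow> edge \<Rightarrow> qpath \<Rightarrow> bool" where
  "is_min_cycle_at n \<sigma> v p \<longleftrightarrow>
     (\<exists>c\<in>min_cycles n \<sigma>. \<exists>k<length c. c ! k = v \<and> p = rotate k c @ [v])"

end

theory Submission
  imports Defs
begin

text \<open>Each summand of C composes nontrivially only with paths starting, resp. ending, at its
  vertex, so C p = Cyc (hd p) p and p C = p Cyc (last p) for every path p. Centrality therefore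
  reduces to moving a minimal cycle along a path, and by induction along a single arrow
  \<alpha> : a \<rightarrow> b, i.e. to Cyc a \<alpha> = \<alpha> Cyc b. Reading a minimal cycle through \<alpha> once at a and
  once at b gives this, because all minimal cycles through a vertex agree modulo the Jacobian
  ideal. That holds since a cyclic triangle and a big cycle sharing an arrow with an end that is
  not a side are identified, at both ends of the arrow, by the cyclic derivative with respect to
  it; any other pair of minimal cycles through a vertex is connected via such pairs, except at a
  vertex touching no diagonal, which lies on only one triangle.\<close>

section \<open>Products of paths and the Jacobian ideal\<close>

lemma pmul_eq_sum_superset:
  assumes "finite S" "{p. x p \<noteq> 0} \<subseteq> S" "finite T" "{q. y q \<noteq> 0} \<subseteq> T"
  shows "pmul x y r = (\<Sum>(p,q)\<in>S\<times>T.
    if p \<noteq> [] \<and> q \<noteq> [] \<and> last p = hd q \<and> p @ tl q = r then x p * y q else (0::'k::field))"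
  unfolding pmul_def
  by (rule sum.mono_neutral_left) (use assms in \<open>auto split: if_splits intro: finite_subset\<close>)

definition concat_ind :: "qpath \<Rightarrow> qpath \<Rightarrow> qpath \<Rightarrow> 'k::field" where
  "concat_ind p q r = (if p \<noteq> [] \<and> q \<noteq> [] \<and> last p = hd q \<and> p @ tl q = r then 1 else 0)"

lemma support_sum_single: "{p. (\<Sum>a\<in>A. c a * single (P a) p) \<noteq> (0::'k::field)} \<subseteq> P ` A"
proof
  fix p assume "p \<in> {p. (\<Sum>a\<in>A. c a * single (P a) p) \<noteq> (0::'k)}"
  then obtain a where "a \<in> A" "c a * single (P a) p \<noteq> 0"
    by (auto elim: sum.not_neutral_contains_not_neutral)
  then show "p \<in> P ` A" by (auto simp: single_def split: if_splits)
qed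

lemma pmul_sum_single:
  fixes c d :: "_ \<Rightarrow> 'k::field"
  assumes A: "finite A" and B: "finite B"
    and x: "x = (\<lambda>r. \<Sum>a\<in>A. c a * single (P a) r)" and y: "y = (\<lambda>r. \<Sum>b\<in>B. d b * single (Q b) r)"
  shows "pmul x y r = (\<Sum>a\<in>A. \<Sum>b\<in>B. c a * d b * concat_ind (P a) (Q b) r)"
proof -
  let ?S = "P ` A \<times> Q ` B"
  have "pmul x y r = (\<Sum>(p,q)\<in>?S. concat_ind p q r * (x p * y q))"
    using support_sum_single[of c P A] support_sum_single[of d Q B]
    by (subst pmul_eq_sum_superset[of "P ` A" x "Q ` B" y]) (auto simp: A B x y concat_ind_def intro!: sum.cong)
  also have "\<dots> = (\<Sum>pq\<in>?S. \<Sum>a\<in>A. \<Sum>b\<in>B.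
      c a * d b * (concat_ind (fst pq) (snd pq) r * single (P a) (fst pq) * single (Q b) (snd pq)))"
    by (auto simp: x y sum_product sum_distrib_left mult_ac intro!: sum.cong) (subst sum.swap, simp add: mult_ac)
  also have "\<dots> = (\<Sum>a\<in>A. \<Sum>b\<in>B. \<Sum>pq\<in>?S.
      c a * d b * (concat_ind (fst pq) (snd pq) r * single (P a) (fst pq) * single (Q b) (snd pq)))"
    by (subst sum.swap) (simp add: sum.swap[where A = ?S])
  also have "\<dots> = (\<Sum>a\<in>A. \<Sum>b\<in>B. c a * d b * concat_ind (P a) (Q b) r)"
  proof (intro sum.cong refl)
    fix a b assume ab: "a \<in> A" "b \<in> B"
    have "(\<Sum>pq\<in>?S. c a * d b * (concat_ind (fst pq) (snd pq) r * single (P a) (fst pq) * single (Q b) (snd pq)))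
        = (\<Sum>pq\<in>?S. if pq = (P a, Q b) then c a * d b * concat_ind (P a) (Q b) r else 0)"
      by (rule sum.cong) (auto simp: single_def)
    also have "\<dots> = c a * d b * concat_ind (P a) (Q b) r"
      using ab by (simp add: A B)
    finally show "(\<Sum>pq\<in>?S. c a * d b * (concat_ind (fst pq) (snd pq) r * single (P a) (fst pq) * single (Q b) (snd pq)))
        = c a * d b * concat_ind (P a) (Q b) r" .
  qed
  finally show ?thesis .
qed

lemma gen_ideal_sum:
  "finite S \<Longrightarrow> (\<And>q. q \<in> S \<Longrightarrow> f q \<in> gen_ideal n \<sigma> R) \<Longrightarrow>
    (\<lambda>r. \<Sum>q\<in>S. c q * f q r) \<in> gen_ideal n \<sigma> R"
proof (induction S rule: finite_induct)
  case empty
  then show ?case using gen_ideal.zero by simp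
next
  case (insert q S)
  then show ?case using gen_ideal.add[OF gen_ideal.smul[of "f q"]] by simp
qed

lemma single_in_KQ: "valid_path n \<sigma> s \<Longrightarrow> single s \<in> KQ n \<sigma>"
  unfolding KQ_def by (auto simp: single_def split: if_splits)

text \<open>The type argument only fixes the field of coefficients.\<close>

definition jac_equiv :: "'k::field itself \<Rightarrow> nat \<Rightarrow> edge set \<Rightarrow> qpath \<Rightarrow> qpath \<Rightarrow> bool" where
  "jac_equiv K n \<sigma> p q \<longleftrightarrow> ((\<lambda>r. single p r - single q r) :: qpath \<Rightarrow> 'k) \<in> jacobian_ideal n \<sigma>"

lemma jac_equiv_refl: "jac_equiv K n \<sigma> p p"
  unfolding jac_equiv_def jacobian_ideal_def using gen_ideal.zero by simp

lemma jac_equiv_sym: "jac_equiv K n \<sigma> p q \<Longrightarrow> jac_equiv K n \<sigma> q p"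
  unfolding jac_equiv_def jacobian_ideal_def by (drule gen_ideal.smul[where c = "-1"]) simp

lemma jac_equiv_trans: "jac_equiv K n \<sigma> p q \<Longrightarrow> jac_equiv K n \<sigma> q w \<Longrightarrow> jac_equiv K n \<sigma> p w"
  unfolding jac_equiv_def jacobian_ideal_def by (drule (1) gen_ideal.add) simp

lemma jac_equiv_append_right:
  assumes "jac_equiv (K::'k::field itself) n \<sigma> p1 p2" "valid_path n \<sigma> s"
    "p1 \<noteq> []" "p2 \<noteq> []" "last p1 = hd s" "last p2 = hd s"
  shows "jac_equiv K n \<sigma> (p1 @ tl s) (p2 @ tl s)"
proof -
  let ?d = "(\<lambda>r. single p1 r - single p2 r) :: qpath \<Rightarrow> 'k"
  have "pmul ?d (single s) \<in> jacobian_ideal n \<sigma>"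
    using assms(1) single_in_KQ[OF assms(2)] unfolding jac_equiv_def jacobian_ideal_def
    by (rule gen_ideal.rmul)
  also have "pmul ?d (single s) = (\<lambda>r. single (p1 @ tl s) r - single (p2 @ tl s) r)"
    by (rule ext, subst pmul_sum_single[where A = "{True, False}" and c = "\<lambda>a. if a then 1 else -1"
          and P = "\<lambda>a. if a then p1 else p2" and B = "{()}" and d = "\<lambda>_. 1" and Q = "\<lambda>_. s"])
       (use assms(2-) in \<open>auto simp: concat_ind_def single_def valid_path_def\<close>)
  finally show ?thesis unfolding jac_equiv_def .
qed

lemma jac_equiv_append_left:
  assumes "jac_equiv (K::'k::field itself) n \<sigma> p1 p2" "valid_path n \<sigma> s"
    "p1 \<noteq> []" "p2 \<noteq> []" "hd p1 = last s" "hd p2 = last s"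
  shows "jac_equiv K n \<sigma> (s @ tl p1) (s @ tl p2)"
proof -
  let ?d = "(\<lambda>r. single p1 r - single p2 r) :: qpath \<Rightarrow> 'k"
  have "pmul (single s) ?d \<in> jacobian_ideal n \<sigma>"
    using assms(1) single_in_KQ[OF assms(2)] unfolding jac_equiv_def jacobian_ideal_def
    by (rule gen_ideal.lmul)
  also have "pmul (single s) ?d = (\<lambda>r. single (s @ tl p1) r - single (s @ tl p2) r)"
    by (rule ext, subst pmul_sum_single[where B = "{True, False}" and d = "\<lambda>a. if a then 1 else -1"
          and Q = "\<lambda>a. if a then p1 else p2" and A = "{()}" and c = "\<lambda>_. 1" and P = "\<lambda>_. s"])
       (use assms(2-) in \<open>auto simp: concat_ind_def single_def valid_path_def\<close>)
  finally show ?thesis unfolding jac_equiv_def .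
qed

lemma sum_single_support:
  fixes x :: "qpath \<Rightarrow> 'k::field"
  assumes "finite S" "{p. x p \<noteq> 0} \<subseteq> S"
  shows "x = (\<lambda>r. \<Sum>q\<in>S. x q * single q r)"
proof
  fix r
  have "(\<Sum>q\<in>S. x q * single q r) = (\<Sum>q\<in>S. if q = r then x r else 0)"
    by (rule sum.cong) (auto simp: single_def)
  then show "x r = (\<Sum>q\<in>S. x q * single q r)"
    using assms by (auto simp: sum.delta')
qed

section \<open>Moving a minimal cycle along a path\<close>

lemma min_cycle_at_hd_last:
  assumes "is_min_cycle_at n \<sigma> v p"
  shows "p \<noteq> [] \<and> hd p = v \<and> last p = v"
  using assms unfolding is_min_cycle_at_def by (auto simp: hd_rotate_conv_nth hd_append)

lemma rotate_nth_Cons: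
  assumes "k < length c"
  shows "rotate k c = c ! k # tl (rotate k c)"
proof -
  have "c \<noteq> []" using assms by auto
  then have "rotate k c \<noteq> []" "hd (rotate k c) = c ! k"
    using assms by (simp_all add: hd_rotate_conv_nth)
  then show ?thesis by (cases "rotate k c") auto
qed

lemma rotate_Suc_nth:
  assumes "k < length c"
  shows "rotate (Suc k) c = tl (rotate k c) @ [c ! k]"
  using rotate_nth_Cons[OF assms] by (metis rotate1.simps(2) rotate_Suc)

lemma Cons_nth_rotate_Suc:
  assumes "k < length c"
  shows "c ! k # rotate (Suc k) c = rotate k c @ [c ! k]"
  using rotate_nth_Cons[OF assms] rotate_Suc_nth[OF assms] by (metis append_Cons)

lemma rotate_Suc_hd_last:
  assumes "k < length c"
  shows "rotate (Suc k) c \<noteq> [] \<and> hd (rotate (Suc k) c) = c ! ((k + 1) mod length c) \<and> last (rotate (Suc k) c) = c ! k"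
proof -
  have "c \<noteq> []" using assms by auto
  then have "rotate (Suc k) c \<noteq> []" "hd (rotate (Suc k) c) = c ! ((k + 1) mod length c)"
    by (simp_all add: hd_rotate_conv_nth del: rotate_Suc)
  moreover have "last (rotate (Suc k) c) = c ! k"
    unfolding rotate_Suc_nth[OF assms] by simp
  ultimately show ?thesis by blast
qed

lemma rotate_mod_Suc: "rotate ((k + 1) mod length c) c = rotate (Suc k) c"
  by (metis rotate_conv_mod Suc_eq_plus1)

lemma valid_path_Cons_Cons:
  "valid_path n \<sigma> (a # b # rest) \<longleftrightarrow> (a, b) \<in> arrows n \<sigma> \<and> a \<in> edges n \<sigma> \<and> valid_path n \<sigma> (b # rest)"
  unfolding valid_path_def by (auto simp: All_less_Suc2)

context
  fixes K :: "'k::field itself" and n \<sigma> and Cyc :: "edge \<Rightarrow> qpath"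
  assumes Cyc: "\<forall>v\<in>edges n \<sigma>. is_min_cycle_at n \<sigma> v (Cyc v)"
    and cycles_equiv: "\<And>v p q. is_min_cycle_at n \<sigma> v p \<Longrightarrow> is_min_cycle_at n \<sigma> v q \<Longrightarrow> jac_equiv K n \<sigma> p q"
    and arrow_in_cycle: "\<And>a b. (a, b) \<in> arrows n \<sigma> \<Longrightarrow>
       \<exists>c\<in>min_cycles n \<sigma>. \<exists>k<length c. c ! k = a \<and> c ! ((k + 1) mod length c) = b"
begin

lemma Cyc_hd_last: "v \<in> edges n \<sigma> \<Longrightarrow> Cyc v \<noteq> [] \<and> hd (Cyc v) = v \<and> last (Cyc v) = v"
  using Cyc min_cycle_at_hd_last by blast

lemma min_cycle_arrow_commute:
  assumes ab: "(a, b) \<in> arrows n \<sigma>" and a: "a \<in> edges n \<sigma>" and b: "b \<in> edges n \<sigma>"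
  shows "jac_equiv K n \<sigma> (Cyc a @ [b]) (a # Cyc b)"
proof -
  have vab: "valid_path n \<sigma> [a, b]"
    using ab a b unfolding valid_path_def by (auto simp: less_Suc_eq)
  obtain c k where c: "c \<in> min_cycles n \<sigma>" "k < length c" "c ! k = a" "c ! ((k + 1) mod length c) = b"
    using arrow_in_cycle[OF ab] by blast
  define pa where "pa = rotate k c @ [a]"
  define pb where "pb = rotate ((k + 1) mod length c) c @ [b]"
  have "(k + 1) mod length c < length c" by (rule mod_less_divisor) (use c(2) in linarith)
  then have pb: "is_min_cycle_at n \<sigma> b pb"
    unfolding is_min_cycle_at_def pb_def using c(1,4) by blast
  have pa: "is_min_cycle_at n \<sigma> a pa"
    unfolding is_min_cycle_at_def pa_def using c(1-3) by blast
  have "jac_equiv K n \<sigma> (Cyc a @ tl [a, b]) (pa @ tl [a, b])"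
    by (rule jac_equiv_append_right[OF cycles_equiv[OF Cyc[rule_format, OF a] pa] vab])
       (use Cyc_hd_last[OF a] min_cycle_at_hd_last[OF pa] in auto)
  moreover have "jac_equiv K n \<sigma> ([a, b] @ tl pb) ([a, b] @ tl (Cyc b))"
    by (rule jac_equiv_append_left[OF cycles_equiv[OF pb Cyc[rule_format, OF b]] vab])
       (use Cyc_hd_last[OF b] min_cycle_at_hd_last[OF pb] in auto)
  moreover have "[a, b] @ tl pb = a # pb" "[a, b] @ tl (Cyc b) = a # Cyc b"
    using min_cycle_at_hd_last[OF pb] Cyc_hd_last[OF b] by (auto simp: neq_Nil_conv)
  moreover have "rotate k c @ [a] = a # rotate (Suc k) c"
    using Cons_nth_rotate_Suc[OF c(2)] c(3) by simp
  then have "pa @ [b] = a # pb"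
    unfolding pa_def pb_def rotate_mod_Suc by simp
  ultimately show ?thesis by (auto intro: jac_equiv_trans)
qed

lemma min_cycle_path_commute:
  "valid_path n \<sigma> q \<Longrightarrow> jac_equiv K n \<sigma> (Cyc (hd q) @ tl q) (q @ tl (Cyc (last q)))"
proof (induction q rule: induct_list012)
  case 1
  then show ?case by (simp add: valid_path_def)
next
  case (2 a)
  then have "Cyc a \<noteq> [] \<and> hd (Cyc a) = a" using Cyc_hd_last by (simp add: valid_path_def)
  then show ?case by (cases "Cyc a") (auto simp: jac_equiv_refl)
next
  case (3 a b rest)
  have ab: "(a, b) \<in> arrows n \<sigma>" "a \<in> edges n \<sigma>" and q: "valid_path n \<sigma> (b # rest)"
    using "3.prems" by (simp_all add: valid_path_Cons_Cons)
  have b: "b \<in> edges n \<sigma>" using q by (simp add: valid_path_def)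
  have vab: "valid_path n \<sigma> [a, b]" using ab b by (simp add: valid_path_Cons_Cons valid_path_def)
  have last: "last (b # rest) \<in> edges n \<sigma>" using q unfolding valid_path_def
    by (meson last_in_set list.discI subsetD)
  have IH: "jac_equiv K n \<sigma> (Cyc b @ rest) ((b # rest) @ tl (Cyc (last (b # rest))))"
    using "3.IH"(2)[OF q] by simp
  have "jac_equiv K n \<sigma> ((Cyc a @ [b]) @ tl (b # rest)) ((a # Cyc b) @ tl (b # rest))"
    by (rule jac_equiv_append_right[OF min_cycle_arrow_commute[OF ab b] q]) (use Cyc_hd_last[OF b] in auto)
  moreover have "jac_equiv K n \<sigma> ([a, b] @ tl (Cyc b @ rest)) ([a, b] @ tl ((b # rest) @ tl (Cyc (last (b # rest)))))"
    by (rule jac_equiv_append_left[OF IH vab])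
       (use Cyc_hd_last[OF b] Cyc_hd_last[OF last] in auto)
  moreover have "[a, b] @ tl (Cyc b @ rest) = a # Cyc b @ rest"
    using Cyc_hd_last[OF b] by (cases "Cyc b") auto
  ultimately show ?case by (auto intro: jac_equiv_trans)
qed

lemma pmul_sum_Cyc_left:
  assumes E: "finite (edges n \<sigma>)" and q: "valid_path n \<sigma> q"
  shows "(\<Sum>v\<in>edges n \<sigma>. concat_ind (Cyc v) q r) = (single (Cyc (hd q) @ tl q) r :: 'k)"
proof -
  have "q \<noteq> []" "hd q \<in> edges n \<sigma>" using q unfolding valid_path_def
    by (auto simp: hd_in_set subsetD)
  then have "(\<Sum>v\<in>edges n \<sigma>. concat_ind (Cyc v) q r)
      = (\<Sum>v\<in>edges n \<sigma>. if v = hd q then single (Cyc (hd q) @ tl q) r else (0::'k))"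
    by (intro sum.cong refl) (use Cyc_hd_last \<open>q \<noteq> []\<close> in \<open>simp add: concat_ind_def single_def\<close>)
  then show ?thesis using \<open>hd q \<in> edges n \<sigma>\<close> E by simp
qed

lemma pmul_sum_Cyc_right:
  assumes E: "finite (edges n \<sigma>)" and q: "valid_path n \<sigma> q"
  shows "(\<Sum>v\<in>edges n \<sigma>. concat_ind q (Cyc v) r) = (single (q @ tl (Cyc (last q))) r :: 'k)"
proof -
  have "q \<noteq> []" "last q \<in> edges n \<sigma>" using q unfolding valid_path_def by auto
  then have "(\<Sum>v\<in>edges n \<sigma>. concat_ind q (Cyc v) r)
      = (\<Sum>v\<in>edges n \<sigma>. if v = last q then single (q @ tl (Cyc (last q))) r else (0::'k))"
    by (intro sum.cong refl) (use Cyc_hd_last \<open>q \<noteq> []\<close> in \<open>simp add: concat_ind_def single_def\<close>)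
  then show ?thesis using \<open>last q \<in> edges n \<sigma>\<close> E by simp
qed

lemma commutator_sum_Cyc_in_jacobian_ideal:
  assumes E: "finite (edges n \<sigma>)" and x: "x \<in> KQ n \<sigma>"
  shows "(let C = (\<lambda>r. \<Sum>v\<in>edges n \<sigma>. single (Cyc v) r :: 'k)
          in (\<lambda>r. pmul C x r - pmul x C r)) \<in> jacobian_ideal n \<sigma>"
proof -
  define S where "S = {p. x p \<noteq> 0}"
  have S: "finite S" "\<And>q. q \<in> S \<Longrightarrow> valid_path n \<sigma> q" using x unfolding KQ_def S_def
    by auto
  have x_eq: "x = (\<lambda>r. \<Sum>q\<in>S. x q * single q r)"
    by (rule sum_single_support[OF S(1)]) (simp add: S_def)
  define C where "C = (\<lambda>r. \<Sum>v\<in>edges n \<sigma>. single (Cyc v) r :: 'k)"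
  have C_eq: "C = (\<lambda>r. \<Sum>v\<in>edges n \<sigma>. 1 * single (Cyc v) r)" by (simp add: C_def)
  have left: "pmul C x r = (\<Sum>q\<in>S. x q * single (Cyc (hd q) @ tl q) r)" for r
  proof -
    have "pmul C x r = (\<Sum>v\<in>edges n \<sigma>. \<Sum>q\<in>S. 1 * x q * concat_ind (Cyc v) q r)"
      by (rule pmul_sum_single[OF E S(1) C_eq x_eq])
    also have "\<dots> = (\<Sum>q\<in>S. x q * single (Cyc (hd q) @ tl q) r)"
      by (subst sum.swap) (simp add: S(2) pmul_sum_Cyc_left[OF E] flip: sum_distrib_left)
    finally show ?thesis .
  qed
  have right: "pmul x C r = (\<Sum>q\<in>S. x q * single (q @ tl (Cyc (last q))) r)" for r
  proof -
    have "pmul x C r = (\<Sum>q\<in>S. \<Sum>v\<in>edges n \<sigma>. x q * 1 * concat_ind q (Cyc v) r)"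
      by (rule pmul_sum_single[OF S(1) E x_eq C_eq])
    also have "\<dots> = (\<Sum>q\<in>S. x q * single (q @ tl (Cyc (last q))) r)"
      by (simp add: S(2) pmul_sum_Cyc_right[OF E] flip: sum_distrib_left)
    finally show ?thesis .
  qed
  have "(\<lambda>r. \<Sum>q\<in>S. x q * (single (Cyc (hd q) @ tl q) r - single (q @ tl (Cyc (last q))) r))
      \<in> jacobian_ideal n \<sigma>"
    unfolding jacobian_ideal_def
  proof (rule gen_ideal_sum[OF S(1)])
    fix q assume "q \<in> S"
    show "(\<lambda>r. single (Cyc (hd q) @ tl q) r - single (q @ tl (Cyc (last q))) r :: 'k) \<in> gen_ideal n \<sigma> (relations n \<sigma>)"
      using min_cycle_path_commute[OF S(2)[OF \<open>q \<in> S\<close>]] unfolding jac_equiv_def jacobian_ideal_def .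
  qed
  moreover have "(\<lambda>r. pmul C x r - pmul x C r)
      = (\<lambda>r. \<Sum>q\<in>S. x q * (single (Cyc (hd q) @ tl q) r - single (q @ tl (Cyc (last q))) r))"
    unfolding left right by (simp add: right_diff_distrib sum_subtractf)
  ultimately show ?thesis by (simp add: C_def Let_def)
qed

end

section \<open>Combinatorics of the triangulation\<close>

lemma triangulation_edge_bounds: "triangulation n \<sigma> \<Longrightarrow> e \<in> edges n \<sigma> \<Longrightarrow> fst e < snd e \<and> snd e < n"
  unfolding triangulation_def edges_def is_diag_def is_side_def by auto

lemma finite_edges: "triangulation n \<sigma> \<Longrightarrow> finite (edges n \<sigma>)"
  apply (rule finite_subset[of _ "{..<n} \<times> {..<n}"])
  using triangulation_edge_bounds by fastforce+

definition ccw_offset :: "nat \<Rightarrow> nat \<Rightarrow> nat \<Rightarrow> nat" where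
  "ccw_offset n e w = (w + n - e) mod n"

definition between :: "nat \<Rightarrow> nat \<Rightarrow> nat \<Rightarrow> bool" where
  "between a b c \<longleftrightarrow> min a b < c \<and> c < max a b"

lemma ccw_offset_eq: "e < n \<Longrightarrow> w < n \<Longrightarrow> ccw_offset n e w = (if e \<le> w then w - e else w + n - e)"
proof (cases "e \<le> w")
  case True
  assume "w < n"
  have 1: "w + n - e = (w - e) + n" using True by auto
  have "w - e < n" using \<open>w<n\<close> by auto
  then show ?thesis using True unfolding ccw_offset_def by (metis 1 mod_add_self2 mod_less)
qed (simp add: ccw_offset_def)

lemma ccw_offset_inj: "e < n \<Longrightarrow> a < n \<Longrightarrow> b < n \<Longrightarrow> ccw_offset n e a = ccw_offset n e b \<Longrightarrow> a = b"
  by (auto simp: ccw_offset_eq split: if_splits)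

lemma ccw_offset_self: "e < n \<Longrightarrow> ccw_offset n e e = 0" by (simp add: ccw_offset_eq)

lemma ccw_offset_less: "e < n \<Longrightarrow> w < n \<Longrightarrow> ccw_offset n e w < n" by (auto simp: ccw_offset_eq)

lemma crosses_edg_iff: "a \<noteq> b \<Longrightarrow> c \<noteq> d \<Longrightarrow>
   crosses (edg a b) (edg c d) \<longleftrightarrow>
     (a \<noteq> c \<and> a \<noteq> d \<and> b \<noteq> c \<and> b \<noteq> d \<and> between a b c \<noteq> between a b d)"
  unfolding crosses_def edg_def between_def by (auto simp: min_def max_def)

lemma between_ccw_offset:
  "a < n \<Longrightarrow> b < n \<Longrightarrow> c < n \<Longrightarrow> e < n \<Longrightarrow> a \<noteq> b \<Longrightarrow> c \<noteq> a \<Longrightarrow> c \<noteq> b \<Longrightarrow>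
   between (ccw_offset n e a) (ccw_offset n e b) (ccw_offset n e c) = (between a b c \<noteq> (min a b < e \<and> e \<le> max a b))"
proof -
  have *: "between (ccw_offset n e a) (ccw_offset n e b) (ccw_offset n e c) = (between a b c \<noteq> (a < e \<and> e \<le> b))"
    if "a < n" "b < n" "c < n" "e < n" "a < b" "c \<noteq> a" "c \<noteq> b" for a b c
    using that unfolding between_def
    by (cases "e \<le> a"; cases "e \<le> b"; cases "e \<le> c"; simp add: ccw_offset_eq min_def max_def; arith)
  assume "a < n" "b < n" "c < n" "e < n" "a \<noteq> b" "c \<noteq> a" "c \<noteq> b"
  then show ?thesis
  proof (cases "a < b")
    case True
    then show ?thesis using *[of a b c] \<open>a<n\<close> \<open>b<n\<close> \<open>c<n\<close> \<open>e<n\<close> \<open>c\<noteq>a\<close> \<open>c\<noteq>b\<close>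
      by (simp add: min_def max_def)
  next
    case False
    have sym: "\<And>x y z. between x y z = between y x z" by (auto simp: between_def)
    from False \<open>a\<noteq>b\<close> have "b < a" by simp
    then show ?thesis using *[of b a c] \<open>a<n\<close> \<open>b<n\<close> \<open>c<n\<close> \<open>e<n\<close> \<open>c\<noteq>a\<close> \<open>c\<noteq>b\<close>
      by (simp add: min_def max_def sym[of "ccw_offset n e a"] sym[of a])
  qed
qed

lemma crosses_edg_iff_ccw_offset:
  "a < n \<Longrightarrow> b < n \<Longrightarrow> c < n \<Longrightarrow> d < n \<Longrightarrow> e < n \<Longrightarrow> a \<noteq> b \<Longrightarrow> c \<noteq> d \<Longrightarrow>
   a \<noteq> c \<Longrightarrow> a \<noteq> d \<Longrightarrow> b \<noteq> c \<Longrightarrow> b \<noteq> d \<Longrightarrow>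
   crosses (edg a b) (edg c d) \<longleftrightarrow>
     between (ccw_offset n e a) (ccw_offset n e b) (ccw_offset n e c) \<noteq>
     between (ccw_offset n e a) (ccw_offset n e b) (ccw_offset n e d)"
  using between_ccw_offset[of a n b c e] between_ccw_offset[of a n b d e] by (simp add: crosses_edg_iff) blast

lemma is_side_edg_iff_ccw_offset: "n \<ge> 3 \<Longrightarrow> e < n \<Longrightarrow> w < n \<Longrightarrow> e \<noteq> w \<Longrightarrow>
   is_side n (edg e w) \<longleftrightarrow> (ccw_offset n e w = 1 \<or> ccw_offset n e w = n - 1)"
  by (cases "e < w") (simp_all add: is_side_def edg_def ccw_offset_eq min_def max_def; arith)+

lemma ccw_offset_nxt: "n \<ge> 3 \<Longrightarrow> i < n \<Longrightarrow> nxt n i < n \<and> ccw_offset n i (nxt n i) = 1"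
  unfolding nxt_def ccw_offset_def by (cases "i + 1 = n") (auto simp: mod_Suc)

lemma ccw_offset_prv: "n \<ge> 3 \<Longrightarrow> i < n \<Longrightarrow> prv n i < n \<and> ccw_offset n i (prv n i) = n - 1"
proof -
  assume n: "n \<ge> 3" "i < n"
  have p: "prv n i = (if i = 0 then n - 1 else i - 1)"
  proof (cases "i = 0")
    case False
    then have "i + n - 1 = (i - 1) + n" by simp
    then show ?thesis using False n unfolding prv_def by (metis mod_add_self2 mod_less less_imp_diff_less)
  qed (use n in \<open>simp add: prv_def\<close>)
  show ?thesis using n by (simp add: p ccw_offset_eq)
qed

lemma side_not_crosses: "is_side n e \<Longrightarrow> snd d < n \<Longrightarrow> \<not> crosses e d \<and> \<not> crosses d e"
  unfolding is_side_def crosses_def by auto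

lemma edges_not_crosses:
  "triangulation n \<sigma> \<Longrightarrow> d \<in> edges n \<sigma> \<Longrightarrow> e \<in> edges n \<sigma> \<Longrightarrow> \<not> crosses d e"
  using side_not_crosses[of n e d] side_not_crosses[of n d e] triangulation_edge_bounds[of n \<sigma>]
  unfolding edges_def triangulation_def by blast

definition nbrs :: "nat \<Rightarrow> edge set \<Rightarrow> nat \<Rightarrow> nat set" where
  "nbrs n \<sigma> e = {w. w < n \<and> edg e w \<in> edges n \<sigma>}"

definition empty_sector :: "nat \<Rightarrow> edge set \<Rightarrow> nat \<Rightarrow> nat \<Rightarrow> nat \<Rightarrow> bool" where
  "empty_sector n \<sigma> e u w \<longleftrightarrow>
     (\<forall>y\<in>nbrs n \<sigma> e. \<not> (ccw_offset n e u < ccw_offset n e y \<and> ccw_offset n e y < ccw_offset n e w))"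

lemma fan_eq_sort_ccw_offset: "fan n \<sigma> e = sort_key (ccw_offset n e) (sorted_list_of_set (nbrs n \<sigma> e))"
  by (simp add: fan_def ccw_offset_def[abs_def] nbrs_def)

lemma finite_nbrs: "finite (nbrs n \<sigma> e)"
  unfolding nbrs_def by simp

lemma set_fan: "set (fan n \<sigma> e) = nbrs n \<sigma> e"
  by (simp add: fan_eq_sort_ccw_offset finite_nbrs)

lemma distinct_fan: "distinct (fan n \<sigma> e)"
  by (simp add: fan_eq_sort_ccw_offset finite_nbrs)

lemma sorted_fan: "sorted (map (ccw_offset n e) (fan n \<sigma> e))"
  by (simp add: fan_eq_sort_ccw_offset)

lemma edg_commute: "edg a b = edg b a"
  by (simp add: edg_def min.commute max.commute)

lemma edg_inject: "edg e a = edg e b \<Longrightarrow> a = b"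
  unfolding edg_def by (auto simp: min_def max_def split: if_splits)

lemma edg_fst_snd: "fst v < snd v \<Longrightarrow> v = edg (fst v) (snd v)"
  unfolding edg_def by (cases v) auto

lemma nbrsD:
  "triangulation n \<sigma> \<Longrightarrow> w \<in> nbrs n \<sigma> e \<Longrightarrow> w \<noteq> e \<and> w < n \<and> e < n \<and> edg e w \<in> edges n \<sigma>"
  unfolding nbrs_def using triangulation_edge_bounds[of n \<sigma> "edg e w"]
    by (auto simp: edg_def min_def max_def split: if_splits)

lemma fan_ccw_offset_less:
  assumes "e < n" "i < j" "j < length (fan n \<sigma> e)"
  shows "ccw_offset n e (fan n \<sigma> e ! i) < ccw_offset n e (fan n \<sigma> e ! j)"
proof -
  let ?f = "fan n \<sigma> e"
  have "ccw_offset n e (?f ! i) \<le> ccw_offset n e (?f ! j)"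
    using sorted_fan[of n e \<sigma>] assms by (auto simp: sorted_iff_nth_mono)
  moreover have "?f ! i \<noteq> ?f ! j" using distinct_fan assms by (simp add: nth_eq_iff_index_eq)
  moreover have "?f ! i < n" "?f ! j < n" using set_fan[of n \<sigma> e] assms nth_mem[of i ?f] nth_mem[of j ?f]
    by (auto simp: nbrs_def)
  ultimately show ?thesis using ccw_offset_inj[OF assms(1)] by (meson le_neq_implies_less)
qed

lemma fan_consecutive_if_empty_sector:
  assumes "e < n" "u \<in> nbrs n \<sigma> e" "w \<in> nbrs n \<sigma> e" "ccw_offset n e u < ccw_offset n e w"
    "empty_sector n \<sigma> e u w"
  shows "\<exists>k. Suc k < length (fan n \<sigma> e) \<and> fan n \<sigma> e ! k = u \<and> fan n \<sigma> e ! Suc k = w"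
proof -
  let ?f = "fan n \<sigma> e"
  obtain a where a: "a < length ?f" "?f ! a = u" using assms(2) set_fan by (metis in_set_conv_nth)
  obtain b where b: "b < length ?f" "?f ! b = w" using assms(3) set_fan by (metis in_set_conv_nth)
  have "a < b"
  proof (rule ccontr)
    assume "\<not> a < b"
    then have "b < a \<or> b = a" by auto
    then show False
    proof
      assume "b < a" then show False using fan_ccw_offset_less[OF assms(1) _ a(1)] a b assms(4) by fastforce
    next
      assume "b = a" then show False using a b assms(4) by simp
    qed
  qed
  moreover have "\<not> Suc a < b"
  proof
    assume h: "Suc a < b"
    have "?f ! Suc a \<in> nbrs n \<sigma> e" using set_fan h b(1) by (metis nth_mem less_trans)
    moreover have "ccw_offset n e u < ccw_offset n e (?f ! Suc a)" using fan_ccw_offset_less[OF assms(1), where \<sigma>=\<sigma>, of a "Suc a"] a h b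
      by simp
    moreover have "ccw_offset n e (?f ! Suc a) < ccw_offset n e w" using fan_ccw_offset_less[OF assms(1), where \<sigma>=\<sigma>, of "Suc a" b] a h b
      by simp
    ultimately show False using assms(5) unfolding empty_sector_def by blast
  qed
  ultimately have "b = Suc a" by simp
  then show ?thesis using a b by blast
qed

lemma empty_sector_fan_Suc:
  assumes "e < n" "Suc k < length (fan n \<sigma> e)"
  shows "empty_sector n \<sigma> e (fan n \<sigma> e ! k) (fan n \<sigma> e ! Suc k)"
  unfolding empty_sector_def
proof (intro ballI notI)
  let ?f = "fan n \<sigma> e"
  fix y assume y: "y \<in> nbrs n \<sigma> e"
    and h: "ccw_offset n e (?f ! k) < ccw_offset n e y \<and> ccw_offset n e y < ccw_offset n e (?f ! Suc k)"
  obtain c where c: "c < length ?f" "?f ! c = y" using y set_fan by (metis in_set_conv_nth)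
  have "c \<le> k \<or> Suc k \<le> c" by auto
  then show False
  proof
    assume "c \<le> k"
    then have "ccw_offset n e y \<le> ccw_offset n e (?f ! k)" using fan_ccw_offset_less[OF assms(1), where \<sigma>=\<sigma>, of c k] c assms(2)
      by (cases "c = k") auto
    then show False using h by simp
  next
    assume "Suc k \<le> c"
    then have "ccw_offset n e (?f ! Suc k) \<le> ccw_offset n e y" using fan_ccw_offset_less[OF assms(1), where \<sigma>=\<sigma>, of "Suc k" c] c
      by (cases "c = Suc k") auto
    then show False using h by simp
  qed
qed

lemma nxt_prv_in_nbrs:
  assumes "n \<ge> 3" "e < n"
  shows "nxt n e \<in> nbrs n \<sigma> e" "prv n e \<in> nbrs n \<sigma> e"
proof -
  have a: "nxt n e < n" "ccw_offset n e (nxt n e) = 1" using ccw_offset_nxt assms by auto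
  have b: "prv n e < n" "ccw_offset n e (prv n e) = n - 1" using ccw_offset_prv assms by auto
  have "nxt n e \<noteq> e" using a ccw_offset_self[OF assms(2)] by auto
  then have "is_side n (edg e (nxt n e))" using is_side_edg_iff_ccw_offset[OF assms(1,2) a(1)] a by simp
  then show "nxt n e \<in> nbrs n \<sigma> e" using a unfolding nbrs_def edges_def by simp
  have "prv n e \<noteq> e" using b ccw_offset_self[OF assms(2)] assms by auto
  then have "is_side n (edg e (prv n e))" using is_side_edg_iff_ccw_offset[OF assms(1,2) b(1)] b by simp
  then show "prv n e \<in> nbrs n \<sigma> e" using b unfolding nbrs_def edges_def by simp
qed

lemma ccw_offset_nbrs_pos: "triangulation n \<sigma> \<Longrightarrow> w \<in> nbrs n \<sigma> e \<Longrightarrow> ccw_offset n e w \<ge> 1"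
proof -
  assume t: "triangulation n \<sigma>" and w: "w \<in> nbrs n \<sigma> e"
  from nbrsD[OF t w] have "w \<noteq> e" "w < n" "e < n" by auto
  then show ?thesis using ccw_offset_inj[of e n w e] ccw_offset_self[of e n] by (cases "ccw_offset n e w") auto
qed

lemma fan_first_last:
  assumes t: "triangulation n \<sigma>" and n: "n \<ge> 3" "e < n"
  shows "fan n \<sigma> e \<noteq> []" "fan n \<sigma> e ! 0 = nxt n e" "fan n \<sigma> e ! (length (fan n \<sigma> e) - 1) = prv n e"
proof -
  let ?f = "fan n \<sigma> e"
  show ne: "?f \<noteq> []" using nxt_prv_in_nbrs[OF n] set_fan by (metis empty_iff list.set(1))
  obtain j where j: "j < length ?f" "?f ! j = nxt n e" using nxt_prv_in_nbrs[OF n] set_fan by (metis in_set_conv_nth)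
  have "j = 0"
  proof (rule ccontr)
    assume "j \<noteq> 0"
    then have "ccw_offset n e (?f ! 0) < 1" using fan_ccw_offset_less[OF n(2), where \<sigma>=\<sigma>, of 0 j] j ccw_offset_nxt[OF n]
      by simp
    moreover have "?f ! 0 \<in> nbrs n \<sigma> e" using ne set_fan by (metis nth_mem length_greater_0_conv)
    ultimately show False using ccw_offset_nbrs_pos[OF t] by fastforce
  qed
  then show "?f ! 0 = nxt n e" using j by simp
  obtain j where j: "j < length ?f" "?f ! j = prv n e" using nxt_prv_in_nbrs[OF n] set_fan by (metis in_set_conv_nth)
  have "j = length ?f - 1"
  proof (rule ccontr)
    assume "j \<noteq> length ?f - 1"
    then have "n - 1 < ccw_offset n e (?f ! (length ?f - 1))" using fan_ccw_offset_less[OF n(2), where \<sigma>=\<sigma>, of j "length ?f - 1"] j ccw_offset_prv[OF n]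
      by simp
    moreover have "?f ! (length ?f - 1) \<in> nbrs n \<sigma> e" using ne set_fan
      by (metis nth_mem diff_less length_greater_0_conv zero_less_one)
    ultimately show False using ccw_offset_less[OF n(2)] nbrsD[OF t] by fastforce
  qed
  then show "?f ! (length ?f - 1) = prv n e" using j by simp
qed

lemma triangles_iff:
  "(p,q,r) \<in> triangles n \<sigma> \<longleftrightarrow>
     p < q \<and> q < r \<and> r < n \<and> (p,q) \<in> edges n \<sigma> \<and> (q,r) \<in> edges n \<sigma> \<and> (p,r) \<in> edges n \<sigma>"
  unfolding triangles_def by simp

lemma set_tri_cycle: "set (tri_cycle (p,q,r)) = {(q,r),(p,q),(p,r)}"
  by (simp add: tri_cycle_def)

lemma length_tri_cycle: "length (tri_cycle T) = 3"
  by (cases T) (simp add: tri_cycle_def)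

lemma set_tri_cycle_subset_edges: "T \<in> triangles n \<sigma> \<Longrightarrow> set (tri_cycle T) \<subseteq> edges n \<sigma>"
  by (cases T) (auto simp: triangles_iff set_tri_cycle)

lemma distinct_tri_cycle: "T \<in> triangles n \<sigma> \<Longrightarrow> distinct (tri_cycle T)"
  by (cases T) (auto simp: triangles_iff tri_cycle_def)

lemma triangle_empty_sector:
  assumes t: "triangulation n \<sigma>" and d: "u \<noteq> w" "e \<noteq> u" "e \<noteq> w" and lt: "u < n" "w < n" "e < n"
    and uw: "edg u w \<in> edges n \<sigma>" and k: "ccw_offset n e u < ccw_offset n e w"
  shows "empty_sector n \<sigma> e u w"
  unfolding empty_sector_def
proof (intro ballI notI)
  fix y assume y: "y \<in> nbrs n \<sigma> e"
    and h: "ccw_offset n e u < ccw_offset n e y \<and> ccw_offset n e y < ccw_offset n e w"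
  have y2: "y \<noteq> e" "y < n" "edg e y \<in> edges n \<sigma>" using nbrsD[OF t y] by auto
  have yu: "y \<noteq> u" "y \<noteq> w" using h by auto
  have "crosses (edg u w) (edg e y)"
    apply (subst crosses_edg_iff_ccw_offset[where e=e])
    using d lt y2 yu h k ccw_offset_self[OF lt(3)] by (auto simp: between_def)
  then show False using edges_not_crosses[OF t uw y2(3)] by simp
qed

lemma no_edge_into_empty_sector:
  assumes t: "triangulation n \<sigma>" and e: "e < n" and u: "u \<in> nbrs n \<sigma> e" and w: "w \<in> nbrs n \<sigma> e"
    and k: "ccw_offset n e u < ccw_offset n e w"
    and empty: "empty_sector n \<sigma> e u w"
    and yz: "y < n" "z < n" "y \<noteq> z" "y \<noteq> u" "y \<noteq> w" "z \<noteq> u" "z \<noteq> w"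
    and yb: "ccw_offset n e u < ccw_offset n e y \<and> ccw_offset n e y < ccw_offset n e w"
    and zb: "\<not> (ccw_offset n e u < ccw_offset n e z \<and> ccw_offset n e z < ccw_offset n e w)"
    and d: "edg y z \<in> edges n \<sigma>"
  shows False
proof -
  have u2: "u \<noteq> e" "u < n" "edg e u \<in> edges n \<sigma>" using nbrsD[OF t u] by auto
  have w2: "w \<noteq> e" "w < n" "edg e w \<in> edges n \<sigma>" using nbrsD[OF t w] by auto
  have ke: "ccw_offset n e e = 0" using ccw_offset_self[OF e] .
  show False
  proof (cases "z = e")
    case True
    then have "y \<in> nbrs n \<sigma> e" using d yz unfolding nbrs_def by (simp add: edg_commute)
    then show False using empty yb unfolding empty_sector_def by blast
  next
    case False
    have ye: "y \<noteq> e" using yb ke by auto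
    have kzne: "ccw_offset n e z \<noteq> ccw_offset n e u" "ccw_offset n e z \<noteq> ccw_offset n e w"
      using ccw_offset_inj[OF e] yz u2 w2 by metis+
    have kz0: "ccw_offset n e z \<noteq> 0" using ccw_offset_inj[OF e] yz False ke e by metis
    have "ccw_offset n e z < ccw_offset n e u \<or> ccw_offset n e w < ccw_offset n e z" using zb kzne by auto
    then show False
    proof
      assume a: "ccw_offset n e z < ccw_offset n e u"
      have "crosses (edg e u) (edg y z)"
        apply (subst crosses_edg_iff_ccw_offset[where e=e])
        using yz u2 ye False e a yb ke kz0 by (auto simp: between_def)
      then show False using edges_not_crosses[OF t u2(3) d] by simp
    next
      assume a: "ccw_offset n e w < ccw_offset n e z"
      have "crosses (edg e w) (edg y z)"
        apply (subst crosses_edg_iff_ccw_offset[where e=e])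
        using yz w2 ye False e a yb ke kz0 by (auto simp: between_def)
      then show False using edges_not_crosses[OF t w2(3) d] by simp
    qed
  qed
qed

lemma consecutive_nbrs_edge:
  assumes t: "triangulation n \<sigma>" and e: "e < n" and u: "u \<in> nbrs n \<sigma> e" and w: "w \<in> nbrs n \<sigma> e"
    and k: "ccw_offset n e u < ccw_offset n e w"
    and empty: "empty_sector n \<sigma> e u w"
  shows "edg u w \<in> edges n \<sigma>"
proof (rule ccontr)
  assume nin: "edg u w \<notin> edges n \<sigma>"
  have u2: "u \<noteq> e" "u < n" using nbrsD[OF t u] by auto
  have w2: "w \<noteq> e" "w < n" using nbrsD[OF t w] by auto
  have uw: "u \<noteq> w" using k by auto
  have "is_diag n (edg u w)"
    using nin uw u2 w2 unfolding is_diag_def edges_def edg_def by (auto simp: min_def max_def)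
  moreover have "edg u w \<notin> \<sigma>" using nin unfolding edges_def by auto
  ultimately obtain d where d: "d \<in> \<sigma>" "crosses (edg u w) d" using t unfolding triangulation_def
    by blast
  have dd: "is_diag n d" using d t unfolding triangulation_def by auto
  define a where "a = fst d"
  define b where "b = snd d"
  have ab: "a < b" "b < n" "d = edg a b" using dd unfolding a_def b_def is_diag_def edg_def
    by (cases d; auto)+
  have de: "edg a b \<in> edges n \<sigma>" using d ab unfolding edges_def by auto
  have cr: "crosses (edg u w) (edg a b)" using d ab by simp
  have dist: "u \<noteq> a" "u \<noteq> b" "w \<noteq> a" "w \<noteq> b" using cr crosses_edg_iff[OF uw, of a b] ab
    by auto
  have x: "between (ccw_offset n e u) (ccw_offset n e w) (ccw_offset n e a) \<noteq> between (ccw_offset n e u) (ccw_offset n e w) (ccw_offset n e b)"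
    using cr crosses_edg_iff_ccw_offset[OF u2(2) w2(2) _ ab(2) e uw _ dist] ab by auto
  have mm: "min (ccw_offset n e u) (ccw_offset n e w) = ccw_offset n e u" "max (ccw_offset n e u) (ccw_offset n e w) = ccw_offset n e w" using k
    by auto
  show False
  proof (cases "between (ccw_offset n e u) (ccw_offset n e w) (ccw_offset n e a)")
    case True
    then show False using no_edge_into_empty_sector[OF t e u w k empty, of a b] x ab dist de mm
      by (auto simp: between_def)
  next
    case False
    then show False using no_edge_into_empty_sector[OF t e u w k empty, of b a] x ab dist de mm
      by (auto simp: between_def edg_commute)
  qed
qed

lemma tri_cycle_arrow_around:
  assumes T: "(p,q,r) \<in> triangles n \<sigma>" and e: "e \<in> {p,q,r}"
  shows "\<exists>u w k. k < 3 \<and> tri_cycle (p,q,r) ! k = edg e u \<and> tri_cycle (p,q,r) ! ((k+1) mod 3) = edg e w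
    \<and> ccw_offset n e u < ccw_offset n e w \<and> {e,u,w} = {p,q,r} \<and> e \<noteq> u \<and> e \<noteq> w \<and> u \<noteq> w"
proof -
  have o: "p < q" "q < r" "r < n" using T triangles_iff by auto
  consider "e = p" | "e = q" | "e = r" using e by auto
  then show ?thesis
  proof cases
    case 1
    show ?thesis
      apply (rule exI[of _ q], rule exI[of _ r], rule exI[of _ 1])
      using o 1 by (auto simp: tri_cycle_def edg_def ccw_offset_eq)
  next
    case 2
    show ?thesis
      apply (rule exI[of _ r], rule exI[of _ p], rule exI[of _ 0])
      using o 2 by (auto simp: tri_cycle_def edg_def ccw_offset_eq)
  next
    case 3
    show ?thesis
      apply (rule exI[of _ p], rule exI[of _ q], rule exI[of _ 2])
      using o 3 by (auto simp: tri_cycle_def edg_def ccw_offset_eq)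
  qed
qed

section \<open>Minimal cycles through a common vertex\<close>

definition cycles_equiv_at ::
    "'k::field itself \<Rightarrow> nat \<Rightarrow> edge set \<Rightarrow> edge \<Rightarrow> edge list \<Rightarrow> edge list \<Rightarrow> bool" where
  "cycles_equiv_at K n \<sigma> v c1 c2 \<longleftrightarrow>
    (\<forall>k1 k2. k1 < length c1 \<longrightarrow> c1!k1 = v \<longrightarrow> k2 < length c2 \<longrightarrow> c2!k2 = v \<longrightarrow>
      jac_equiv K n \<sigma> (rotate k1 c1 @ [v]) (rotate k2 c2 @ [v]))"

lemma cycles_equiv_atI:
  assumes "distinct c1" "distinct c2" "k1 < length c1" "c1!k1 = v" "k2 < length c2" "c2!k2 = v"
    "jac_equiv K n \<sigma> (rotate k1 c1 @ [v]) (rotate k2 c2 @ [v])"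
  shows "cycles_equiv_at K n \<sigma> v c1 c2"
  unfolding cycles_equiv_at_def
proof (intro allI impI)
  fix j1 j2 assume "j1 < length c1" "c1!j1 = v" "j2 < length c2" "c2!j2 = v"
  then have "j1 = k1" "j2 = k2" using assms by (metis nth_eq_iff_index_eq)+
  then show "jac_equiv K n \<sigma> (rotate j1 c1 @ [v]) (rotate j2 c2 @ [v])" using assms by simp
qed

lemma cycles_equiv_at_refl: "distinct c \<Longrightarrow> cycles_equiv_at K n \<sigma> v c c"
  unfolding cycles_equiv_at_def by (metis jac_equiv_refl nth_eq_iff_index_eq)

lemma cycles_equiv_at_sym: "cycles_equiv_at K n \<sigma> v c1 c2 \<Longrightarrow> cycles_equiv_at K n \<sigma> v c2 c1"
  unfolding cycles_equiv_at_def by (blast intro: jac_equiv_sym)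

lemma cycles_equiv_at_trans:
  "cycles_equiv_at K n \<sigma> v c1 c2 \<Longrightarrow> cycles_equiv_at K n \<sigma> v c2 c3 \<Longrightarrow> v \<in> set c2 \<Longrightarrow>
    cycles_equiv_at K n \<sigma> v c1 c3"
  unfolding cycles_equiv_at_def by (metis jac_equiv_trans in_set_conv_nth)

lemma cycderiv_distinct:
  assumes "distinct c" "k < length c" "c!k = x" "c!((k+1) mod length c) = y"
  shows "cycderiv (x,y) c r = (single (rotate (Suc k) c) r :: 'k::field)"
proof -
  have "cycderiv (x,y) c r = (\<Sum>j<length c. if j = k then (if rotate (Suc k) c = r then 1 else 0) else (0::'k))"
    unfolding cycderiv_def
  proof (rule sum.cong[OF refl])
    fix j assume j: "j \<in> {..<length c}"
    show "(if (c ! j, c ! ((j + 1) mod length c)) = (x, y) \<and> rotate (Suc j) c = r then 1 else 0) =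
         (if j = k then if rotate (Suc k) c = r then 1 else 0 else (0::'k))"
    proof (cases "j = k")
      case True then show ?thesis using assms by simp
    next
      case False
      then have "c ! j \<noteq> x" using assms j nth_eq_iff_index_eq by fastforce
      then show ?thesis using False by simp
    qed
  qed
  also have "\<dots> = (if rotate (Suc k) c = r then 1 else 0)" using assms(2)
    by (subst sum.delta[OF finite_lessThan]) (simp del: rotate_Suc)
  finally show ?thesis unfolding single_def by (metis (full_types))
qed

lemma cycderiv_not_arrow:
  assumes "(x,y) \<notin> cyc_arrows c"
  shows "cycderiv (x,y) c r = (0 :: 'k::field)"
  unfolding cycderiv_def
  apply (rule sum.neutral)
  using assms unfolding cyc_arrows_def by auto

lemma tri_cycles_share_two_eq:
  assumes "T1 \<in> triangles n \<sigma>" "T2 \<in> triangles n \<sigma>" "x \<noteq> y"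
    "x \<in> set (tri_cycle T1)" "y \<in> set (tri_cycle T1)" "x \<in> set (tri_cycle T2)" "y \<in> set (tri_cycle T2)"
  shows "T1 = T2"
  using assms by (cases T1; cases T2) (auto simp: triangles_iff set_tri_cycle)

lemma set_big_cycle: "set (big_cycle n \<sigma> e) = edg e ` nbrs n \<sigma> e"
  by (simp add: big_cycle_def set_fan)

lemma distinct_big_cycle: "distinct (big_cycle n \<sigma> e)"
  unfolding big_cycle_def using distinct_fan
  by (auto simp: distinct_map inj_on_def intro: edg_inject)

lemma edg_eq_other: "edg e1 a = edg e2 b \<Longrightarrow> e1 \<noteq> e2 \<Longrightarrow> a = e2"
  unfolding edg_def by (auto simp: min_def max_def split: if_splits)

lemma big_cycles_share_two_eq:
  assumes "x \<noteq> y" "x \<in> set (big_cycle n \<sigma> e1)" "y \<in> set (big_cycle n \<sigma> e1)"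
    "x \<in> set (big_cycle n \<sigma> e2)" "y \<in> set (big_cycle n \<sigma> e2)"
  shows "e1 = e2"
proof (rule ccontr)
  assume ne: "e1 \<noteq> e2"
  obtain a b a' b' where "x = edg e1 a" "y = edg e1 b" "x = edg e2 a'" "y = edg e2 b'"
    using assms(2-5) set_big_cycle by (metis imageE)
  then have "a = e2" "b = e2" using edg_eq_other ne by metis+
  then show False using assms(1) \<open>x = edg e1 a\<close> \<open>y = edg e1 b\<close> by simp
qed

lemma finite_triangles: "finite (triangles n \<sigma>)"
  apply (rule finite_subset[of _ "{..<n} \<times> {..<n} \<times> {..<n}"])
  by (auto simp: triangles_def)

lemma finite_ext_vertices: "finite (ext_vertices n \<sigma>)"
  by (rule finite_subset[of _ "{..<n}"]) (auto simp: ext_vertices_def)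

lemma cyc_arrowsD: "(x,y) \<in> cyc_arrows c \<Longrightarrow> x \<in> set c \<and> y \<in> set c"
proof -
  assume "(x,y) \<in> cyc_arrows c"
  then obtain k where k: "k < length c" "x = c!k" "y = c!((k+1) mod length c)" unfolding cyc_arrows_def
    by blast
  have "(k+1) mod length c < length c" using k(1) by (auto intro: mod_less_divisor)
  then show ?thesis using k by simp
qed

lemma sum_cycderiv_unique_cycle:
  assumes "finite I" "i \<in> I" "distinct (c i)" "k < length (c i)"
    "c i ! k = x" "c i ! ((k + 1) mod length (c i)) = y"
    and unique: "\<And>j. j \<in> I \<Longrightarrow> x \<in> set (c j) \<Longrightarrow> y \<in> set (c j) \<Longrightarrow> j = i"
  shows "(\<Sum>j\<in>I. cycderiv (x, y) (c j) r) = (single (rotate (Suc k) (c i)) r :: 'k::field)"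
proof -
  have "(\<Sum>j\<in>I. cycderiv (x, y) (c j) r) = (\<Sum>j\<in>I. if j = i then single (rotate (Suc k) (c i)) r else (0::'k))"
  proof (rule sum.cong[OF refl])
    fix j assume "j \<in> I"
    show "cycderiv (x, y) (c j) r = (if j = i then single (rotate (Suc k) (c i)) r else (0::'k))"
    proof (cases "j = i")
      case True
      then show ?thesis using cycderiv_distinct[OF assms(3-6)] by simp
    next
      case False
      then have "(x, y) \<notin> cyc_arrows (c j)" using unique \<open>j \<in> I\<close> cyc_arrowsD by blast
      then show ?thesis using False cycderiv_not_arrow by simp
    qed
  qed
  then show ?thesis using assms(1,2) by simp
qed

text \<open>An arrow lies on at most one cyclic triangle and at most one big cycle, so only these two
  cycles contribute to the cyclic derivative.\<close>

lemma dW_shared_arrow: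
  assumes T: "T \<in> triangles n \<sigma>" and k: "k < 3" "tri_cycle T ! k = x" "tri_cycle T ! ((k + 1) mod 3) = y"
    and e: "e \<in> ext_vertices n \<sigma>" and m: "m < length (big_cycle n \<sigma> e)" "big_cycle n \<sigma> e ! m = x"
      "big_cycle n \<sigma> e ! ((m + 1) mod length (big_cycle n \<sigma> e)) = y"
  shows "(dW n \<sigma> (x, y) :: qpath \<Rightarrow> 'k::field)
      = (\<lambda>r. single (rotate (Suc k) (tri_cycle T)) r - single (rotate (Suc m) (big_cycle n \<sigma> e)) r)"
proof -
  let ?t = "tri_cycle T" and ?b = "big_cycle n \<sigma> e"
  have k': "(k + 1) mod 3 < 3" "(k + 1) mod 3 \<noteq> k" using k(1) by presburger+
  have m': "(m + 1) mod length ?b < length ?b" by (rule mod_less_divisor) (use m(1) in linarith)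
  have xy: "x \<noteq> y"
    using nth_eq_iff_index_eq[OF distinct_tri_cycle[OF T], of k "(k + 1) mod 3"] k k'
    by (simp add: length_tri_cycle)
  have xy_t: "x \<in> set ?t" "y \<in> set ?t"
    using k k' nth_mem[of k ?t] nth_mem[of "(k + 1) mod 3" ?t] by (simp_all add: length_tri_cycle)
  have xy_b: "x \<in> set ?b" "y \<in> set ?b"
    using m m' by (metis nth_mem)+
  have "k < length ?t" "?t ! ((k + 1) mod length ?t) = y"
    using k unfolding length_tri_cycle by simp_all
  then have "(\<Sum>t\<in>triangles n \<sigma>. cycderiv (x, y) (tri_cycle t) r) = (single (rotate (Suc k) ?t) r :: 'k)" for r
    using sum_cycderiv_unique_cycle[where c = tri_cycle, OF finite_triangles T distinct_tri_cycle[OF T] _ k(2)]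
      tri_cycles_share_two_eq[OF _ T xy _ _ xy_t] by blast
  moreover have "(\<Sum>i\<in>ext_vertices n \<sigma>. cycderiv (x, y) (big_cycle n \<sigma> i) r) = (single (rotate (Suc m) ?b) r :: 'k)" for r
    using sum_cycderiv_unique_cycle[where c = "big_cycle n \<sigma>", OF finite_ext_vertices e distinct_big_cycle m]
      big_cycles_share_two_eq[OF xy _ _ xy_b] by blast
  ultimately show ?thesis by (simp add: dW_def)
qed

lemma cycles_equiv_at_arrow_ends:
  assumes c1: "distinct c1" "k < length c1" "c1 ! k = x" "c1 ! ((k + 1) mod length c1) = y"
    and c2: "distinct c2" "m < length c2" "c2 ! m = x" "c2 ! ((m + 1) mod length c2) = y"
    and xy: "valid_path n \<sigma> [x, y]"
    and eq: "jac_equiv K n \<sigma> (rotate (Suc k) c1) (rotate (Suc m) c2)"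
  shows "cycles_equiv_at K n \<sigma> x c1 c2 \<and> cycles_equiv_at K n \<sigma> y c1 c2"
proof -
  have r1: "rotate (Suc k) c1 \<noteq> []" "hd (rotate (Suc k) c1) = y" "last (rotate (Suc k) c1) = x"
    using rotate_Suc_hd_last[OF c1(2)] unfolding c1(3,4) by blast+
  have r2: "rotate (Suc m) c2 \<noteq> []" "hd (rotate (Suc m) c2) = y" "last (rotate (Suc m) c2) = x"
    using rotate_Suc_hd_last[OF c2(2)] unfolding c2(3,4) by blast+
  have "jac_equiv K n \<sigma> ([x, y] @ tl (rotate (Suc k) c1)) ([x, y] @ tl (rotate (Suc m) c2))"
    by (rule jac_equiv_append_left[OF eq xy]) (use r1 r2 in auto)
  moreover have "[x, y] @ tl (rotate (Suc k) c1) = rotate k c1 @ [x]"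
    using r1 Cons_nth_rotate_Suc[OF c1(2)] c1(3) by (auto simp: neq_Nil_conv)
  moreover have "[x, y] @ tl (rotate (Suc m) c2) = rotate m c2 @ [x]"
    using r2 Cons_nth_rotate_Suc[OF c2(2)] c2(3) by (auto simp: neq_Nil_conv)
  ultimately have "cycles_equiv_at K n \<sigma> x c1 c2"
    using cycles_equiv_atI[OF c1(1) c2(1) c1(2,3) c2(2,3)] by simp
  moreover have "jac_equiv K n \<sigma> (rotate (Suc k) c1 @ tl [x, y]) (rotate (Suc m) c2 @ tl [x, y])"
    by (rule jac_equiv_append_right[OF eq xy]) (use r1 r2 in auto)
  then have "jac_equiv K n \<sigma> (rotate ((k + 1) mod length c1) c1 @ [y]) (rotate ((m + 1) mod length c2) c2 @ [y])"
    unfolding rotate_mod_Suc by (simp del: rotate_Suc)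
  moreover have "(k + 1) mod length c1 < length c1" by (rule mod_less_divisor) (use c1(2) in linarith)
  moreover have "(m + 1) mod length c2 < length c2" by (rule mod_less_divisor) (use c2(2) in linarith)
  ultimately show ?thesis
    using cycles_equiv_atI[OF c1(1) c2(1) _ c1(4) _ c2(4)] by blast
qed

lemma shared_arrow_cycles_equiv:
  assumes T: "T \<in> triangles n \<sigma>" and k: "k < 3" "tri_cycle T ! k = x" "tri_cycle T ! ((k + 1) mod 3) = y"
    and e: "e \<in> ext_vertices n \<sigma>" and m: "m < length (big_cycle n \<sigma> e)" "big_cycle n \<sigma> e ! m = x"
      "big_cycle n \<sigma> e ! ((m + 1) mod length (big_cycle n \<sigma> e)) = y"
    and not_sides: "x \<notin> sides n \<or> y \<notin> sides n"
  shows "cycles_equiv_at (K::'k::field itself) n \<sigma> x (tri_cycle T) (big_cycle n \<sigma> e)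
    \<and> cycles_equiv_at K n \<sigma> y (tri_cycle T) (big_cycle n \<sigma> e)"
proof (rule cycles_equiv_at_arrow_ends)
  have arrow: "(x, y) \<in> arrows n \<sigma>"
    unfolding arrows_def int_arrows_def cyc_arrows_def using T k by (fastforce simp: length_tri_cycle)
  then have "dW n \<sigma> (x, y) \<in> relations n \<sigma>"
    using not_sides unfolding relations_def by (intro CollectI exI[of _ "(x, y)"]) auto
  then have "(dW n \<sigma> (x, y) :: qpath \<Rightarrow> 'k) \<in> jacobian_ideal n \<sigma>"
    unfolding jacobian_ideal_def by (rule gen_ideal.base)
  then show "jac_equiv K n \<sigma> (rotate (Suc k) (tri_cycle T)) (rotate (Suc m) (big_cycle n \<sigma> e))"
    by (simp add: jac_equiv_def dW_shared_arrow[OF T k e m])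
  have "x \<in> set (tri_cycle T)" "y \<in> set (tri_cycle T)"
    using k by (auto simp: length_tri_cycle intro!: nth_mem)
  then show "valid_path n \<sigma> [x, y]"
    using arrow set_tri_cycle_subset_edges[OF T] by (auto simp: valid_path_def less_Suc_eq)
qed (use T k m distinct_tri_cycle distinct_big_cycle in \<open>simp_all add: length_tri_cycle\<close>)

lemma triangle_edg:
  "(p,q,r) \<in> triangles n \<sigma> \<Longrightarrow> a \<in> {p,q,r} \<Longrightarrow> b \<in> {p,q,r} \<Longrightarrow> a \<noteq> b \<Longrightarrow> edg a b \<in> edges n \<sigma>"
  by (auto simp: triangles_iff edg_def)

lemma tri_cycle_edge_endpoints: "(p,q,r) \<in> triangles n \<sigma> \<Longrightarrow> v \<in> set (tri_cycle (p,q,r)) \<Longrightarrow>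
   fst v \<in> {p,q,r} \<and> snd v \<in> {p,q,r} \<and> fst v < snd v \<and> v = edg (fst v) (snd v)"
  by (auto simp: triangles_iff set_tri_cycle edg_def)

lemma ext_vertex_diag_nbr:
  assumes t: "triangulation n \<sigma>" and e: "e \<in> ext_vertices n \<sigma>"
  shows "\<exists>z. z \<in> nbrs n \<sigma> e \<and> \<not> is_side n (edg e z)"
proof -
  obtain d where d: "d \<in> \<sigma>" "fst d = e \<or> snd d = e" using e unfolding ext_vertices_def by auto
  have dd: "is_diag n d" using d t unfolding triangulation_def by auto
  then have "fst d < snd d" "snd d < n" unfolding is_diag_def by auto
  then have "\<exists>z. d = edg e z \<and> z < n"
  proof (cases "fst d = e")
    case True
    then show ?thesis using edg_fst_snd[of d] \<open>fst d < snd d\<close> \<open>snd d < n\<close> by metis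
  next
    case False
    then have "snd d = e" using d(2) by simp
    then show ?thesis using edg_fst_snd[of d] edg_commute \<open>fst d < snd d\<close> \<open>snd d < n\<close>
      by (metis less_trans)
  qed
  then obtain z where z: "d = edg e z" "z < n" by blast
  then have "z \<in> nbrs n \<sigma> e" using d unfolding nbrs_def edges_def by auto
  moreover have "\<not> is_side n (edg e z)" using dd z unfolding is_diag_def by simp
  ultimately show ?thesis by blast
qed

text \<open>At a vertex incident to a diagonal the two polygon sides are not adjacent in the fan, so no
  arrow around it joins two sides and its relation is imposed.\<close>

lemma consecutive_nbrs_not_both_sides:
  assumes t: "triangulation n \<sigma>" and n3: "n \<ge> 3" and e: "e \<in> ext_vertices n \<sigma>"
    and nbrs: "u \<in> nbrs n \<sigma> e" "w \<in> nbrs n \<sigma> e" and uw: "ccw_offset n e u < ccw_offset n e w"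
    and empty: "empty_sector n \<sigma> e u w"
  shows "edg e u \<notin> sides n \<or> edg e w \<notin> sides n"
proof (rule ccontr)
  assume "\<not> ?thesis"
  then have s: "is_side n (edg e u)" "is_side n (edg e w)" unfolding sides_def by auto
  have u: "e \<noteq> u" "u < n" "e < n" and w: "e \<noteq> w" "w < n"
    using nbrsD[OF t nbrs(1)] nbrsD[OF t nbrs(2)] by auto
  have "ccw_offset n e u = 1 \<or> ccw_offset n e u = n - 1" "ccw_offset n e w = 1 \<or> ccw_offset n e w = n - 1"
    using s is_side_edg_iff_ccw_offset[OF n3 u(3) u(2) u(1)] is_side_edg_iff_ccw_offset[OF n3 u(3) w(2) w(1)]
    by simp_all
  then have side_offsets: "ccw_offset n e u = 1" "ccw_offset n e w = n - 1" using uw n3 by auto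
  obtain z where z: "z \<in> nbrs n \<sigma> e" "\<not> is_side n (edg e z)"
    using ext_vertex_diag_nbr[OF t e] by blast
  have "e \<noteq> z" "z < n" using nbrsD[OF t z(1)] by auto
  then have "ccw_offset n e z \<noteq> 1" "ccw_offset n e z \<noteq> n - 1" "ccw_offset n e z < n"
    using is_side_edg_iff_ccw_offset[OF n3 u(3) \<open>z < n\<close> \<open>e \<noteq> z\<close>] ccw_offset_less[OF u(3) \<open>z < n\<close>] z(2)
    by simp_all
  moreover have "ccw_offset n e z \<ge> 1" using ccw_offset_nbrs_pos[OF t z(1)] .
  ultimately show False using empty[unfolded empty_sector_def, rule_format, OF z(1)] side_offsets by auto
qed

text \<open>The triangle and the big cycle at e share the arrow between the two triangle sides at e,
  which are consecutive in the fan of e.\<close>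

lemma tri_big_cycles_equiv:
  fixes K :: "'k::field itself"
  assumes t: "triangulation n \<sigma>" and n3: "n \<ge> 3" and T: "T \<in> triangles n \<sigma>" and v: "v \<in> set (tri_cycle T)"
    and e: "e \<in> ext_vertices n \<sigma>" and ev: "e = fst v \<or> e = snd v"
  shows "cycles_equiv_at K n \<sigma> v (tri_cycle T) (big_cycle n \<sigma> e)"
proof -
  obtain p q r where pqr: "T = (p,q,r)" by (cases T) auto
  note T' = T[unfolded pqr]
  have o: "p < q" "q < r" "r < n" using T' triangles_iff by auto
  have fs: "fst v \<in> {p,q,r} \<and> snd v \<in> {p,q,r} \<and> fst v < snd v \<and> v = edg (fst v) (snd v)"
    using tri_cycle_edge_endpoints[OF T'] v pqr by simp
  have eT: "e \<in> {p,q,r}" using fs ev by auto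
  obtain u w k where uwk: "k < 3" "tri_cycle (p,q,r) ! k = edg e u" "tri_cycle (p,q,r) ! ((k+1) mod 3) = edg e w"
    "ccw_offset n e u < ccw_offset n e w" "{e,u,w} = {p,q,r}" "e \<noteq> u" "e \<noteq> w" "u \<noteq> w"
    using tri_cycle_arrow_around[OF T' eT] by blast
  have "e \<in> {p,q,r}" "u \<in> {p,q,r}" "w \<in> {p,q,r}" using uwk(5) by blast+
  then have lt: "e < n" "u < n" "w < n" using o by auto
  have uT: "u \<in> {p,q,r}" "w \<in> {p,q,r}" using uwk(5) by auto
  have un: "u \<in> nbrs n \<sigma> e" "w \<in> nbrs n \<sigma> e" using triangle_edg[OF T'] uT eT uwk lt unfolding nbrs_def
    by auto
  have uwE: "edg u w \<in> edges n \<sigma>" using triangle_edg[OF T'] uT uwk by auto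
  have empty: "empty_sector n \<sigma> e u w"
    by (rule triangle_empty_sector[OF t uwk(8) uwk(6) uwk(7) lt(2,3,1) uwE uwk(4)])
  obtain j where j: "Suc j < length (fan n \<sigma> e)" "fan n \<sigma> e ! j = u" "fan n \<sigma> e ! Suc j = w"
    using fan_consecutive_if_empty_sector[OF lt(1) un uwk(4) empty] by blast
  have bj: "j < length (big_cycle n \<sigma> e)" "big_cycle n \<sigma> e ! j = edg e u"
      "big_cycle n \<sigma> e ! ((j + 1) mod length (big_cycle n \<sigma> e)) = edg e w"
    using j unfolding big_cycle_def by auto
  have not_sides: "edg e u \<notin> sides n \<or> edg e w \<notin> sides n"
    by (rule consecutive_nbrs_not_both_sides[OF t n3 e un uwk(4) empty])
  have R: "cycles_equiv_at K n \<sigma> (edg e u) (tri_cycle T) (big_cycle n \<sigma> e)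
      \<and> cycles_equiv_at K n \<sigma> (edg e w) (tri_cycle T) (big_cycle n \<sigma> e)"
    using shared_arrow_cycles_equiv[OF T, of k "edg e u" "edg e w" e j] uwk pqr e bj not_sides by simp
  have "v = edg e u \<or> v = edg e w"
  proof -
    have "\<exists>x. x \<in> {p,q,r} \<and> x \<noteq> e \<and> v = edg e x"
    proof (cases "e = fst v")
      case True then show ?thesis using fs by (intro exI[of _ "snd v"]) auto
    next
      case False then have "e = snd v" using ev by simp
      then show ?thesis using fs edg_commute[of "fst v" "snd v"] by (intro exI[of _ "fst v"]) auto
    qed
    then obtain x where x: "x \<in> {p,q,r}" "x \<noteq> e" "v = edg e x" by blast
    then have "x = u \<or> x = w" using uwk(5) by auto
    then show ?thesis using x by auto
  qed
  then show ?thesis using R by auto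
qed

lemma edge_in_big_cycle:
  assumes t: "triangulation n \<sigma>" and v: "v \<in> edges n \<sigma>" and e: "e = fst v \<or> e = snd v"
  shows "v \<in> set (big_cycle n \<sigma> e)"
proof -
  have b: "fst v < snd v" "snd v < n" using triangulation_edge_bounds[OF t v] by auto
  have ve: "v = edg (fst v) (snd v)" using edg_fst_snd b by simp
  show ?thesis
  proof (cases "e = fst v")
    case True
    then have "snd v \<in> nbrs n \<sigma> e" using b v ve unfolding nbrs_def by simp
    then show ?thesis using set_big_cycle True ve by (metis image_eqI)
  next
    case False
    then have e2: "e = snd v" using e by simp
    then have "fst v \<in> nbrs n \<sigma> e" using b v ve edg_commute unfolding nbrs_def
      by (metis less_trans mem_Collect_eq)
    then show ?thesis using set_big_cycle e2 ve edg_commute by (metis image_eqI)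
  qed
qed

lemma big_cycle_endpoint: "v \<in> set (big_cycle n \<sigma> e) \<Longrightarrow> e = fst v \<or> e = snd v"
  unfolding set_big_cycle edg_def by (auto simp: min_def max_def split: if_splits)

lemma set_big_cycle_subset_edges: "set (big_cycle n \<sigma> e) \<subseteq> edges n \<sigma>"
  unfolding set_big_cycle nbrs_def by auto

lemma tri_cycle_third_vertex:
  assumes T: "(p,q,r) \<in> triangles n \<sigma>" and v: "v \<in> set (tri_cycle (p,q,r))"
  shows "\<exists>z. z \<noteq> fst v \<and> z \<noteq> snd v \<and> z < n \<and> edg (fst v) z \<in> edges n \<sigma> \<and> {p,q,r} = {fst v, snd v, z}"
proof -
  have o: "p < q" "q < r" "r < n" "(p,q) \<in> edges n \<sigma>" "(q,r) \<in> edges n \<sigma>" "(p,r) \<in> edges n \<sigma>" using T triangles_iff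
    by auto
  have "v = (q,r) \<or> v = (p,q) \<or> v = (p,r)" using v set_tri_cycle by auto
  then show ?thesis
  proof (elim disjE)
    assume "v = (q,r)" then show ?thesis using o by (intro exI[of _ p]) (auto simp: edg_def)
  next
    assume "v = (p,q)" then show ?thesis using o by (intro exI[of _ r]) (auto simp: edg_def)
  next
    assume "v = (p,r)" then show ?thesis using o by (intro exI[of _ q]) (auto simp: edg_def)
  qed
qed

lemma triangle_eq_if_vertices_eq:
  assumes "(p,q,r) \<in> triangles n \<sigma>" "(p',q',r') \<in> triangles n \<sigma>" "{p,q,r} = {p',q',r'}"
  shows "(p,q,r) = (p',q',r')"
proof -
  have o: "p < q" "q < r" "p' < q'" "q' < r'" using assms(1,2) triangles_iff by auto
  have a: "p \<in> {p',q',r'}" "q \<in> {p',q',r'}" "r \<in> {p',q',r'}" "p' \<in> {p,q,r}" "q' \<in> {p,q,r}" "r' \<in> {p,q,r}"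
    using assms(3) by blast+
  from a o show ?thesis by auto
qed

lemma non_ext_edge_ccw_offset:
  assumes n3: "n \<ge> 3" and i: "i < n" "i \<notin> ext_vertices n \<sigma>"
    and z: "z < n" "z \<noteq> i" "edg i z \<in> edges n \<sigma>"
  shows "ccw_offset n i z = 1 \<or> ccw_offset n i z = n - 1"
proof -
  have "fst (edg i z) = i \<or> snd (edg i z) = i" by (simp add: edg_def min_def max_def)
  then have "edg i z \<notin> \<sigma>" using i unfolding ext_vertices_def by auto
  then have "is_side n (edg i z)" using z(3) unfolding edges_def by auto
  then show ?thesis using is_side_edg_iff_ccw_offset[OF n3 i(1) z(1)] z(2) by simp
qed

lemma triangle_unique_at_non_ext:
  assumes t: "triangulation n \<sigma>" and n3: "n \<ge> 3" and ne: "fst v \<notin> ext_vertices n \<sigma>"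
    and T1: "T1 \<in> triangles n \<sigma>" and T2: "T2 \<in> triangles n \<sigma>"
    and v1: "v \<in> set (tri_cycle T1)" and v2: "v \<in> set (tri_cycle T2)"
  shows "T1 = T2"
proof -
  obtain p q r where P: "T1 = (p,q,r)" by (cases T1) auto
  obtain p' q' r' where P': "T2 = (p',q',r')" by (cases T2) auto
  have vE: "v \<in> edges n \<sigma>" using set_tri_cycle_subset_edges[OF T1] v1 by auto
  have vb: "fst v < snd v" "snd v < n" using triangulation_edge_bounds[OF t vE] by auto
  let ?i = "fst v" and ?j = "snd v"
  have i: "?i < n" using vb by simp
  note offset = non_ext_edge_ccw_offset[OF n3 i ne]
  have kj: "ccw_offset n ?i ?j = 1 \<or> ccw_offset n ?i ?j = n - 1"
    using offset[OF vb(2)] vb vE edg_fst_snd[of v] by simp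
  obtain o1 where o1: "o1 \<noteq> ?i" "o1 \<noteq> ?j" "o1 < n" "edg ?i o1 \<in> edges n \<sigma>" "{p,q,r} = {?i, ?j, o1}"
    using tri_cycle_third_vertex[of p q r n \<sigma> v] T1 v1 P by auto
  obtain o2 where o2: "o2 \<noteq> ?i" "o2 \<noteq> ?j" "o2 < n" "edg ?i o2 \<in> edges n \<sigma>" "{p',q',r'} = {?i, ?j, o2}"
    using tri_cycle_third_vertex[of p' q' r' n \<sigma> v] T2 v2 P' by auto
  have "ccw_offset n ?i o1 \<noteq> ccw_offset n ?i ?j" "ccw_offset n ?i o2 \<noteq> ccw_offset n ?i ?j"
    using ccw_offset_inj[OF i] o1 o2 vb by metis+
  then have "ccw_offset n ?i o1 = ccw_offset n ?i o2"
    using offset[OF o1(3,1,4)] offset[OF o2(3,1,4)] kj n3 by auto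
  then have "o1 = o2" using ccw_offset_inj[OF i o1(3) o2(3)] by simp
  then have "{p,q,r} = {p',q',r'}" using o1 o2 by simp
  then show ?thesis using triangle_eq_if_vertices_eq T1 T2 P P' by simp
qed

lemma tri_cycles_equiv:
  fixes K :: "'k::field itself"
  assumes t: "triangulation n \<sigma>" and n3: "n \<ge> 3"
    and T1: "T1 \<in> triangles n \<sigma>" and T2: "T2 \<in> triangles n \<sigma>"
    and v1: "v \<in> set (tri_cycle T1)" and v2: "v \<in> set (tri_cycle T2)"
  shows "cycles_equiv_at K n \<sigma> v (tri_cycle T1) (tri_cycle T2)"
proof -
  have vE: "v \<in> edges n \<sigma>" using set_tri_cycle_subset_edges[OF T1] v1 by auto
  have via_big_cycle: "cycles_equiv_at K n \<sigma> v (tri_cycle T1) (tri_cycle T2)"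
    if e: "e \<in> ext_vertices n \<sigma>" "e = fst v \<or> e = snd v" for e
  proof -
    have "cycles_equiv_at K n \<sigma> v (tri_cycle T1) (big_cycle n \<sigma> e)"
      by (rule tri_big_cycles_equiv[OF t n3 T1 v1 e])
    moreover have "cycles_equiv_at K n \<sigma> v (big_cycle n \<sigma> e) (tri_cycle T2)"
      by (rule cycles_equiv_at_sym[OF tri_big_cycles_equiv[OF t n3 T2 v2 e]])
    ultimately show ?thesis using cycles_equiv_at_trans edge_in_big_cycle[OF t vE e(2)] by blast
  qed
  show ?thesis
  proof (cases "fst v \<in> ext_vertices n \<sigma>")
    case True then show ?thesis using via_big_cycle by blast
  next
    case False
    then have "T1 = T2" using triangle_unique_at_non_ext[OF t n3 False T1 T2 v1 v2] by simp
    then show ?thesis using cycles_equiv_at_refl[OF distinct_tri_cycle[OF T1]] by simp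
  qed
qed

lemma triangle_of_edges:
  assumes "a \<noteq> b" "b \<noteq> c" "a \<noteq> c" "a < n" "b < n" "c < n"
    "edg a b \<in> edges n \<sigma>" "edg b c \<in> edges n \<sigma>" "edg a c \<in> edges n \<sigma>"
  shows "\<exists>T\<in>triangles n \<sigma>. set (tri_cycle T) = {edg a b, edg b c, edg a c}"
proof -
  have s: "\<And>p q r. p < q \<Longrightarrow> q < r \<Longrightarrow> r < n \<Longrightarrow> (p,q) \<in> edges n \<sigma> \<Longrightarrow> (q,r) \<in> edges n \<sigma> \<Longrightarrow> (p,r) \<in> edges n \<sigma>
     \<Longrightarrow> (p,q,r) \<in> triangles n \<sigma> \<and> set (tri_cycle (p,q,r)) = {(p,q),(q,r),(p,r)}"
    by (auto simp: triangles_iff set_tri_cycle)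
  consider "a < b" "b < c" | "a < c" "c < b" | "b < a" "a < c" | "b < c" "c < a" | "c < a" "a < b" | "c < b" "b < a"
    using assms(1-3) by linarith
  then show ?thesis
  proof cases
    case 1 then show ?thesis using s[of a b c] assms by (auto simp: edg_def)
  next
    case 2 then show ?thesis using s[of a c b] assms by (auto simp: edg_def)
  next
    case 3 then show ?thesis using s[of b a c] assms by (auto simp: edg_def)
  next
    case 4 then show ?thesis using s[of b c a] assms by (auto simp: edg_def)
  next
    case 5 then show ?thesis using s[of c a b] assms by (auto simp: edg_def)
  next
    case 6 then show ?thesis using s[of c b a] assms by (auto simp: edg_def)
  qed
qed

lemma nbr_edge_in_triangle:
  assumes t: "triangulation n \<sigma>" and n3: "n \<ge> 3" and e: "e < n" and j: "j \<in> nbrs n \<sigma> e"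
  shows "\<exists>T\<in>triangles n \<sigma>. edg e j \<in> set (tri_cycle T)"
proof -
  let ?f = "fan n \<sigma> e"
  obtain a where a: "a < length ?f" "?f ! a = j" using j set_fan by (metis in_set_conv_nth)
  have l2: "length ?f \<ge> 2"
  proof (rule ccontr)
    assume "\<not> length ?f \<ge> 2"
    then have "length ?f \<le> 1" by simp
    moreover have "nxt n e \<in> set ?f" "prv n e \<in> set ?f" using nxt_prv_in_nbrs[OF n3 e] set_fan by auto
    ultimately have "nxt n e = prv n e"
      by (metis in_set_conv_nth less_one le_neq_implies_less less_le_trans)
    then show False using ccw_offset_nxt[OF n3 e] ccw_offset_prv[OF n3 e] n3 by simp
  qed
  obtain b where b: "Suc b < length ?f" "?f ! b = j \<or> ?f ! Suc b = j"
  proof (cases "Suc a < length ?f")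
    case True then show ?thesis using that a by blast
  next
    case False
    then have "a = length ?f - 1" "a \<ge> 1" using a l2 by auto
    then have s: "Suc (a - 1) = a" by simp
    show ?thesis by (rule that[of "a - 1"]) (use s a in auto)
  qed
  define u where "u = ?f ! b"
  define w where "w = ?f ! Suc b"
  have un: "u \<in> nbrs n \<sigma> e" "w \<in> nbrs n \<sigma> e" unfolding u_def w_def using b(1) set_fan
    by (metis nth_mem Suc_lessD)+
  have k: "ccw_offset n e u < ccw_offset n e w" unfolding u_def w_def using fan_ccw_offset_less[OF e, of b "Suc b" \<sigma>] b
    by simp
  have empty: "empty_sector n \<sigma> e u w"
    unfolding u_def w_def by (rule empty_sector_fan_Suc[OF e b(1)])
  have uw: "edg u w \<in> edges n \<sigma>" using consecutive_nbrs_edge[OF t e un k empty] .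
  have pu: "u \<noteq> e" "u < n" "edg e u \<in> edges n \<sigma>" using nbrsD[OF t un(1)] by auto
  have pw: "w \<noteq> e" "w < n" "edg e w \<in> edges n \<sigma>" using nbrsD[OF t un(2)] by auto
  have "u \<noteq> w" using k by auto
  then obtain T where T: "T \<in> triangles n \<sigma>" "set (tri_cycle T) = {edg e u, edg u w, edg e w}"
    using triangle_of_edges[of e u w n \<sigma>] pu pw uw e by auto
  have "edg e j = edg e u \<or> edg e j = edg e w" using b u_def w_def by auto
  then show ?thesis using T by auto
qed

lemma big_cycles_equiv:
  fixes K :: "'k::field itself"
  assumes t: "triangulation n \<sigma>" and n3: "n \<ge> 3"
    and e1: "e1 \<in> ext_vertices n \<sigma>" and e2: "e2 \<in> ext_vertices n \<sigma>"
    and v1: "v \<in> set (big_cycle n \<sigma> e1)" and v2: "v \<in> set (big_cycle n \<sigma> e2)"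
  shows "cycles_equiv_at K n \<sigma> v (big_cycle n \<sigma> e1) (big_cycle n \<sigma> e2)"
proof (cases "e1 = e2")
  case True then show ?thesis using cycles_equiv_at_refl[OF distinct_big_cycle] by simp
next
  case False
  have vE: "v \<in> edges n \<sigma>" using set_big_cycle_subset_edges v1 by auto
  have vb: "fst v < snd v" "snd v < n" using triangulation_edge_bounds[OF t vE] by auto
  have jn: "snd v \<in> nbrs n \<sigma> (fst v)" using vb vE edg_fst_snd[of v] unfolding nbrs_def by simp
  obtain T where T: "T \<in> triangles n \<sigma>" "edg (fst v) (snd v) \<in> set (tri_cycle T)"
    using nbr_edge_in_triangle[OF t n3 _ jn] vb by auto
  have vT: "v \<in> set (tri_cycle T)" using T edg_fst_snd[of v] vb by simp
  have "cycles_equiv_at K n \<sigma> v (tri_cycle T) (big_cycle n \<sigma> e1)"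
    by (rule tri_big_cycles_equiv[OF t n3 T(1) vT e1 big_cycle_endpoint[OF v1]])
  moreover have "cycles_equiv_at K n \<sigma> v (tri_cycle T) (big_cycle n \<sigma> e2)"
    by (rule tri_big_cycles_equiv[OF t n3 T(1) vT e2 big_cycle_endpoint[OF v2]])
  ultimately show ?thesis using cycles_equiv_at_trans cycles_equiv_at_sym vT by blast
qed

lemma min_cycles_equiv:
  fixes K :: "'k::field itself"
  assumes t: "triangulation n \<sigma>" and n3: "n \<ge> 3"
    and c1: "c1 \<in> min_cycles n \<sigma>" and c2: "c2 \<in> min_cycles n \<sigma>"
    and v1: "v \<in> set c1" and v2: "v \<in> set c2"
  shows "cycles_equiv_at K n \<sigma> v c1 c2"
proof -
  have tri_or_big: "(\<exists>T\<in>triangles n \<sigma>. c = tri_cycle T) \<or> (\<exists>e\<in>ext_vertices n \<sigma>. c = big_cycle n \<sigma> e)"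
    if "c \<in> min_cycles n \<sigma>" for c
    using that unfolding min_cycles_def by blast
  show ?thesis
    using tri_or_big[OF c1]
  proof (elim disjE bexE)
    fix T1 assume T1: "T1 \<in> triangles n \<sigma>" "c1 = tri_cycle T1"
    show ?thesis
      using tri_or_big[OF c2]
    proof (elim disjE bexE)
      fix T2 assume "T2 \<in> triangles n \<sigma>" "c2 = tri_cycle T2"
      then show ?thesis using tri_cycles_equiv[OF t n3 T1(1)] T1(2) v1 v2 by blast
    next
      fix e2 assume "e2 \<in> ext_vertices n \<sigma>" "c2 = big_cycle n \<sigma> e2"
      then show ?thesis using tri_big_cycles_equiv[OF t n3 T1(1)] T1(2) v1 v2 big_cycle_endpoint by blast
    qed
  next
    fix e1 assume e1: "e1 \<in> ext_vertices n \<sigma>" "c1 = big_cycle n \<sigma> e1"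
    show ?thesis
      using tri_or_big[OF c2]
    proof (elim disjE bexE)
      fix T2 assume "T2 \<in> triangles n \<sigma>" "c2 = tri_cycle T2"
      then show ?thesis
        using cycles_equiv_at_sym[OF tri_big_cycles_equiv[OF t n3 _ _ e1(1)]] e1(2) v1 v2 big_cycle_endpoint
        by blast
    next
      fix e2 assume "e2 \<in> ext_vertices n \<sigma>" "c2 = big_cycle n \<sigma> e2"
      then show ?thesis using big_cycles_equiv[OF t n3 e1(1)] e1(2) v1 v2 by blast
    qed
  qed
qed

lemma min_cycles_at_equiv:
  fixes K :: "'k::field itself"
  assumes t: "triangulation n \<sigma>" and n3: "n \<ge> 3"
    and p1: "is_min_cycle_at n \<sigma> v p1" and p2: "is_min_cycle_at n \<sigma> v p2"
  shows "jac_equiv K n \<sigma> p1 p2"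
proof -
  obtain c1 k1 where a: "c1 \<in> min_cycles n \<sigma>" "k1 < length c1" "c1 ! k1 = v" "p1 = rotate k1 c1 @ [v]"
    using p1 unfolding is_min_cycle_at_def by blast
  obtain c2 k2 where b: "c2 \<in> min_cycles n \<sigma>" "k2 < length c2" "c2 ! k2 = v" "p2 = rotate k2 c2 @ [v]"
    using p2 unfolding is_min_cycle_at_def by blast
  have "cycles_equiv_at K n \<sigma> v c1 c2" using min_cycles_equiv[OF t n3 a(1) b(1)] a b nth_mem by metis
  then show ?thesis using a b unfolding cycles_equiv_at_def by blast
qed

lemma arrow_in_min_cycle:
  assumes t: "triangulation n \<sigma>" and n3: "n \<ge> 3" and ab: "(a,b) \<in> arrows n \<sigma>"
  shows "\<exists>c\<in>min_cycles n \<sigma>. \<exists>k<length c. c!k = a \<and> c!((k+1) mod length c) = b"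
proof -
  have "(a,b) \<in> int_arrows n \<sigma> \<or> (a,b) \<in> ext_arrows n \<sigma>" using ab unfolding arrows_def
    by auto
  then show ?thesis
  proof
    assume "(a,b) \<in> int_arrows n \<sigma>"
    then obtain T where "T \<in> triangles n \<sigma>" "(a,b) \<in> cyc_arrows (tri_cycle T)" unfolding int_arrows_def
      by blast
    then show ?thesis unfolding cyc_arrows_def min_cycles_def by blast
  next
    assume "(a,b) \<in> ext_arrows n \<sigma>"
    then obtain i where i: "i \<in> ext_vertices n \<sigma>" "a = edg (prv n i) i" "b = edg i (nxt n i)"
      unfolding ext_arrows_def by blast
    have il: "i < n" using i unfolding ext_vertices_def by auto
    note ff = fan_first_last[OF t n3 il]
    let ?c = "big_cycle n \<sigma> i"
    have lc: "length ?c = length (fan n \<sigma> i)" "length ?c > 0" using ff unfolding big_cycle_def by auto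
    have "?c ! (length ?c - 1) = a" using ff lc i edg_commute unfolding big_cycle_def by auto
    moreover have "?c ! ((length ?c - 1 + 1) mod length ?c) = b" using ff lc i unfolding big_cycle_def by auto
    moreover have "?c \<in> min_cycles n \<sigma>" using i unfolding min_cycles_def by auto
    ultimately show ?thesis using lc by (metis diff_less zero_less_one)
  qed
qed

theorem proposition2p12:
  fixes n :: nat and \<sigma> :: "edge set" and Cyc :: "edge \<Rightarrow> qpath"
  assumes "n \<ge> 3" and "triangulation n \<sigma>"
    and "\<forall>v\<in>edges n \<sigma>. is_min_cycle_at n \<sigma> v (Cyc v)"
  shows "\<forall>x \<in> (KQ n \<sigma> :: (qpath \<Rightarrow> 'k::field) set).
           (let C = (\<lambda>r. \<Sum>v\<in>edges n \<sigma>. single (Cyc v) r :: 'k)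
            in (\<lambda>r. pmul C x r - pmul x C r)) \<in> jacobian_ideal n \<sigma>"
proof -
  have "jac_equiv TYPE('k) n \<sigma> p q"
    if "is_min_cycle_at n \<sigma> v p" "is_min_cycle_at n \<sigma> v q" for v p q
    using min_cycles_at_equiv[OF assms(2,1) that] .
  then show ?thesis
    using commutator_sum_Cyc_in_jacobian_ideal[OF assms(3) _ arrow_in_min_cycle[OF assms(2,1)] finite_edges[OF assms(2)]]
    by blast
qed

end
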